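(* Let ${}_{\mathfrak Y}\mathfrak B_{\mathfrak X}$ be a left-fibrant graph of bisets. If for all $y\in\mathfrak Y$ the maps $()^-\colon G_y\to G_{y^-}$ are injective, then for every vertex $z\in\mathfrak B$ the natural map \[B_z\to\pi_1(\mathfrak B,\lambda(z),\rho(z)),\qquad b\mapsto 1\otimes b\otimes 1,\] is injective.
   Context: Graphs and graphs of groups. A graph is a set $V\sqcup E$ with $x\mapsto x^-\in V$, $x\mapsto\bar x$, $\bar{\bar x}=x$, $x=x^-\iff x=\bar x\iff x\in V$; $x^+=(\bar x)^-$. Graph morphisms commute with these (may send edges to vertices); simplicial ones send edges to edges. A graph of groups is a connected graph with groups $G_x$ and homomorphisms $g\mapsto g^-\colon G_x\to G_{x^-}$, $g\mapsto\bar g\colon G_x\to G_{\bar x}$ ($G_x\to G_{\bar x}\to G_x$ identity, both identity for vertices); fundamental groupoid $\pi_1(\mathfrak X)$: objects $V$, generated by the $x\in\mathfrak X$ (from $x^-$ to $x^+$) and elements of the $G_v$, relations of the $G_v$, $v=1\in G_v$, $x\bar x=1$, $g^-x=xg^+$ ($g^+=(\bar g)^-$); $\pi_1(\mathfrak X,v,w)$ = morphisms from $v$ to $w$. Graphs of bisets: a graph $\mathfrak B$, graph morphisms $\lambda\colon\mathfrak B\to\mathfrak Y$, $\rho\colon\mathfrak B\to\mathfrak X$, $G_{\lambda(z)}$-$G_{\rho(z)}$-bisets $B_z$ and congruences $b\mapsto b^-\colon B_z\to B_{z^-}$, $b\mapsto\bar b\colon B_z\to B_{\bar z}$ w.r.t.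 the group homomorphisms (same axioms), $b^+=(\bar b)^-$. Fundamental biset $\pi_1(\mathfrak B,\dagger,* )$ for vertices $\dagger,*$: $\bigsqcup_{z\in V(\mathfrak B)}\pi_1(\mathfrak Y,\dagger,\lambda(z))\otimes_{G_{\lambda(z)}}B_z\otimes_{G_{\rho(z)}}\pi_1(\mathfrak X,\rho(z),* )$ modulo $q\otimes b^-\otimes p=q\lambda(z)\otimes b^+\otimes\overline{\rho(z)}p$ for edges $z$ ($\lambda(z),\overline{\rho(z)}$ groupoid morphisms, trivial if vertices). Left-fibrant: $\rho$ simplicial and for every vertex $v\in\mathfrak B$ and edge $f\in\mathfrak X$ with $f^-=\rho(v)$, the map $\bigsqcup_{e\in\rho^{-1}(f),\,e^-=v}G_{\lambda(v)}\otimes_{G_{\lambda(e)}}B_e\to B_v$, $g\otimes b\mapsto gb^-$, is an isomorphism of $G_{\lambda(v)}$-$G_f$-bisets. *)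

theory Defs
  imports "HOL-Algebra.Group"
begin

text \<open>A graph is a set X with maps x \<mapsto> x^- (src) and x \<mapsto> x-bar (rev).\<close>

definition is_graph :: "'x set \<Rightarrow> ('x \<Rightarrow> 'x) \<Rightarrow> ('x \<Rightarrow> 'x) \<Rightarrow> bool" where
  "is_graph X s r \<longleftrightarrow>
     (\<forall>x\<in>X. s x \<in> X \<and> r x \<in> X \<and> s (s x) = s x \<and> r (r x) = x
            \<and> (x = s x \<longleftrightarrow> x = r x))"

definition verts :: "'x set \<Rightarrow> ('x \<Rightarrow> 'x) \<Rightarrow> 'x set" where
  "verts X s = {x\<in>X. s x = x}"

definition edges :: "'x set \<Rightarrow> ('x \<Rightarrow> 'x) \<Rightarrow> 'x set" where
  "edges X s = {x\<in>X. s x \<noteq> x}"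

definition graph_connected :: "'x set \<Rightarrow> ('x \<Rightarrow> 'x) \<Rightarrow> ('x \<Rightarrow> 'x) \<Rightarrow> bool" where
  "graph_connected X s r \<longleftrightarrow> verts X s \<noteq> {} \<and>
     (\<forall>v\<in>verts X s. \<forall>w\<in>verts X s. (v, w) \<in> {(s x, s (r x)) | x. x \<in> X}\<^sup>*)"

definition graph_morphism ::
  "'x set \<Rightarrow> ('x \<Rightarrow> 'x) \<Rightarrow> ('x \<Rightarrow> 'x) \<Rightarrow> 'y set \<Rightarrow> ('y \<Rightarrow> 'y) \<Rightarrow> ('y \<Rightarrow> 'y)
   \<Rightarrow> ('x \<Rightarrow> 'y) \<Rightarrow> bool" where
  "graph_morphism X s r Y s' r' f \<longleftrightarrow>
     (\<forall>x\<in>X. f x \<in> Y \<and> f (s x) = s' (f x) \<and> f (r x) = r' (f x))"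

record ('x, 'g) gog =
  gog_car :: "'x set"
  gog_src :: "'x \<Rightarrow> 'x"
  gog_rev :: "'x \<Rightarrow> 'x"
  gog_grp :: "'x \<Rightarrow> 'g monoid"
  gog_hsrc :: "'x \<Rightarrow> 'g \<Rightarrow> 'g"
  gog_hrev :: "'x \<Rightarrow> 'g \<Rightarrow> 'g"

definition gverts :: "('x, 'g) gog \<Rightarrow> 'x set" where
  "gverts \<Gamma> = verts (gog_car \<Gamma>) (gog_src \<Gamma>)"

definition gedges :: "('x, 'g) gog \<Rightarrow> 'x set" where
  "gedges \<Gamma> = edges (gog_car \<Gamma>) (gog_src \<Gamma>)"

definition gtgt :: "('x, 'g) gog \<Rightarrow> 'x \<Rightarrow> 'x" where
  "gtgt \<Gamma> x = gog_src \<Gamma> (gog_rev \<Gamma> x)"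

definition hplus :: "('x, 'g) gog \<Rightarrow> 'x \<Rightarrow> 'g \<Rightarrow> 'g" where
  "hplus \<Gamma> x g = gog_hsrc \<Gamma> (gog_rev \<Gamma> x) (gog_hrev \<Gamma> x g)"

definition graph_of_groups :: "('x, 'g) gog \<Rightarrow> bool" where
  "graph_of_groups \<Gamma> \<longleftrightarrow>
     is_graph (gog_car \<Gamma>) (gog_src \<Gamma>) (gog_rev \<Gamma>) \<and>
     graph_connected (gog_car \<Gamma>) (gog_src \<Gamma>) (gog_rev \<Gamma>) \<and>
     (\<forall>x\<in>gog_car \<Gamma>.
        group (gog_grp \<Gamma> x) \<and>
        gog_hsrc \<Gamma> x \<in> hom (gog_grp \<Gamma> x) (gog_grp \<Gamma> (gog_src \<Gamma> x)) \<and>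
        gog_hrev \<Gamma> x \<in> hom (gog_grp \<Gamma> x) (gog_grp \<Gamma> (gog_rev \<Gamma> x)) \<and>
        (\<forall>g\<in>carrier (gog_grp \<Gamma> x). gog_hrev \<Gamma> (gog_rev \<Gamma> x) (gog_hrev \<Gamma> x g) = g)) \<and>
     (\<forall>v\<in>gverts \<Gamma>. \<forall>g\<in>carrier (gog_grp \<Gamma> v).
        gog_hsrc \<Gamma> v g = g \<and> gog_hrev \<Gamma> v g = g)"

text \<open>Words: generators Gen x (x any element of the graph, from x^- to x^+)
  and Elt v g (g in G_v, a loop at the vertex v).\<close>

datatype ('x, 'g) letter = Gen 'x | Elt 'x 'g

fun valid_word :: "('x, 'g) gog \<Rightarrow> ('x, 'g) letter list \<Rightarrow> 'x \<Rightarrow> 'x \<Rightarrow> bool" where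
  "valid_word \<Gamma> [] v w \<longleftrightarrow> v \<in> gverts \<Gamma> \<and> v = w"
| "valid_word \<Gamma> (Gen x # ws) v w \<longleftrightarrow>
     x \<in> gog_car \<Gamma> \<and> gog_src \<Gamma> x = v \<and> valid_word \<Gamma> ws (gtgt \<Gamma> x) w"
| "valid_word \<Gamma> (Elt u g # ws) v w \<longleftrightarrow>
     u \<in> gverts \<Gamma> \<and> u = v \<and> g \<in> carrier (gog_grp \<Gamma> u) \<and> valid_word \<Gamma> ws u w"

inductive_set basic_rel :: "('x, 'g) gog \<Rightarrow> (('x, 'g) letter list \<times> ('x, 'g) letter list) set"
  for \<Gamma> where
  mult: "\<lbrakk>v \<in> gverts \<Gamma>; g \<in> carrier (gog_grp \<Gamma> v); h \<in> carrier (gog_grp \<Gamma> v)\<rbrakk>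
         \<Longrightarrow> ([Elt v g, Elt v h], [Elt v (g \<otimes>\<^bsub>gog_grp \<Gamma> v\<^esub> h)]) \<in> basic_rel \<Gamma>"
| one: "v \<in> gverts \<Gamma> \<Longrightarrow> ([Elt v \<one>\<^bsub>gog_grp \<Gamma> v\<^esub>], []) \<in> basic_rel \<Gamma>"
| vert: "v \<in> gverts \<Gamma> \<Longrightarrow> ([Gen v], []) \<in> basic_rel \<Gamma>"
| inv: "x \<in> gog_car \<Gamma> \<Longrightarrow> ([Gen x, Gen (gog_rev \<Gamma> x)], []) \<in> basic_rel \<Gamma>"
| conj: "\<lbrakk>x \<in> gog_car \<Gamma>; g \<in> carrier (gog_grp \<Gamma> x)\<rbrakk>
         \<Longrightarrow> ([Elt (gog_src \<Gamma> x) (gog_hsrc \<Gamma> x g), Gen x],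
              [Gen x, Elt (gtgt \<Gamma> x) (hplus \<Gamma> x g)]) \<in> basic_rel \<Gamma>"

definition word_step :: "('x, 'g) gog \<Rightarrow> (('x, 'g) letter list \<times> ('x, 'g) letter list) set" where
  "word_step \<Gamma> = {(u @ l @ t, u @ r @ t) | u l r t. (l, r) \<in> basic_rel \<Gamma>}"

definition eqc :: "'a set \<Rightarrow> ('a \<times> 'a) set \<Rightarrow> ('a \<times> 'a) set" where
  "eqc A r = Id_on A \<union> ((r \<inter> A \<times> A) \<union> (r \<inter> A \<times> A)\<inverse>)\<^sup>+"

definition paths :: "('x, 'g) gog \<Rightarrow> 'x \<Rightarrow> 'x \<Rightarrow> ('x, 'g) letter list set" where
  "paths \<Gamma> v w = {ws. valid_word \<Gamma> ws v w}"

definition path_eq :: "('x, 'g) gog \<Rightarrow> 'x \<Rightarrow> 'x \<Rightarrow> (('x, 'g) letter list \<times> ('x, 'g) letter list) set" where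
  "path_eq \<Gamma> v w = eqc (paths \<Gamma> v w) (word_step \<Gamma>)"

definition pi1 :: "('x, 'g) gog \<Rightarrow> 'x \<Rightarrow> 'x \<Rightarrow> ('x, 'g) letter list set set" where
  "pi1 \<Gamma> v w = paths \<Gamma> v w // path_eq \<Gamma> v w"

definition is_biset :: "'g monoid \<Rightarrow> 'h monoid \<Rightarrow> 'b set \<Rightarrow> ('g \<Rightarrow> 'b \<Rightarrow> 'b) \<Rightarrow> ('b \<Rightarrow> 'h \<Rightarrow> 'b) \<Rightarrow> bool" where
  "is_biset G H B la ra \<longleftrightarrow>
     (\<forall>g\<in>carrier G. \<forall>b\<in>B. la g b \<in> B) \<and>
     (\<forall>b\<in>B. \<forall>h\<in>carrier H. ra b h \<in> B) \<and>
     (\<forall>b\<in>B. la \<one>\<^bsub>G\<^esub> b = b \<and> ra b \<one>\<^bsub>H\<^esub> = b) \<and>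
     (\<forall>g\<in>carrier G. \<forall>g'\<in>carrier G. \<forall>b\<in>B. la (g \<otimes>\<^bsub>G\<^esub> g') b = la g (la g' b)) \<and>
     (\<forall>h\<in>carrier H. \<forall>h'\<in>carrier H. \<forall>b\<in>B. ra b (h \<otimes>\<^bsub>H\<^esub> h') = ra (ra b h) h') \<and>
     (\<forall>g\<in>carrier G. \<forall>h\<in>carrier H. \<forall>b\<in>B. la g (ra b h) = ra (la g b) h)"

record ('z, 'y, 'x, 'b, 'g, 'h) gob =
  gob_car :: "'z set"
  gob_src :: "'z \<Rightarrow> 'z"
  gob_rev :: "'z \<Rightarrow> 'z"
  gob_lam :: "'z \<Rightarrow> 'y"
  gob_rho :: "'z \<Rightarrow> 'x"
  gob_set :: "'z \<Rightarrow> 'b set"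
  gob_lact :: "'z \<Rightarrow> 'g \<Rightarrow> 'b \<Rightarrow> 'b"
  gob_ract :: "'z \<Rightarrow> 'b \<Rightarrow> 'h \<Rightarrow> 'b"
  gob_csrc :: "'z \<Rightarrow> 'b \<Rightarrow> 'b"
  gob_crev :: "'z \<Rightarrow> 'b \<Rightarrow> 'b"

definition bverts :: "('z, 'y, 'x, 'b, 'g, 'h) gob \<Rightarrow> 'z set" where
  "bverts B = verts (gob_car B) (gob_src B)"

definition bedges :: "('z, 'y, 'x, 'b, 'g, 'h) gob \<Rightarrow> 'z set" where
  "bedges B = edges (gob_car B) (gob_src B)"

definition btgt :: "('z, 'y, 'x, 'b, 'g, 'h) gob \<Rightarrow> 'z \<Rightarrow> 'z" where
  "btgt B z = gob_src B (gob_rev B z)"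

definition bplus :: "('z, 'y, 'x, 'b, 'g, 'h) gob \<Rightarrow> 'z \<Rightarrow> 'b \<Rightarrow> 'b" where
  "bplus B z b = gob_csrc B (gob_rev B z) (gob_crev B z b)"

definition graph_of_bisets ::
  "('z, 'y, 'x, 'b, 'g, 'h) gob \<Rightarrow> ('y, 'g) gog \<Rightarrow> ('x, 'h) gog \<Rightarrow> bool" where
  "graph_of_bisets B Y X \<longleftrightarrow>
     graph_of_groups Y \<and> graph_of_groups X \<and>
     is_graph (gob_car B) (gob_src B) (gob_rev B) \<and>
     graph_morphism (gob_car B) (gob_src B) (gob_rev B) (gog_car Y) (gog_src Y) (gog_rev Y) (gob_lam B) \<and>
     graph_morphism (gob_car B) (gob_src B) (gob_rev B) (gog_car X) (gog_src X) (gog_rev X) (gob_rho B) \<and>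
     (\<forall>z\<in>gob_car B.
        is_biset (gog_grp Y (gob_lam B z)) (gog_grp X (gob_rho B z)) (gob_set B z)
                 (gob_lact B z) (gob_ract B z) \<and>
        (\<forall>b\<in>gob_set B z.
           gob_csrc B z b \<in> gob_set B (gob_src B z) \<and>
           gob_crev B z b \<in> gob_set B (gob_rev B z) \<and>
           gob_crev B (gob_rev B z) (gob_crev B z b) = b) \<and>
        (\<forall>g\<in>carrier (gog_grp Y (gob_lam B z)). \<forall>b\<in>gob_set B z.
           gob_csrc B z (gob_lact B z g b)
             = gob_lact B (gob_src B z) (gog_hsrc Y (gob_lam B z) g) (gob_csrc B z b) \<and>
           gob_crev B z (gob_lact B z g b)
             = gob_lact B (gob_rev B z) (gog_hrev Y (gob_lam B z) g) (gob_crev B z b)) \<and>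
        (\<forall>h\<in>carrier (gog_grp X (gob_rho B z)). \<forall>b\<in>gob_set B z.
           gob_csrc B z (gob_ract B z b h)
             = gob_ract B (gob_src B z) (gob_csrc B z b) (gog_hsrc X (gob_rho B z) h) \<and>
           gob_crev B z (gob_ract B z b h)
             = gob_ract B (gob_rev B z) (gob_crev B z b) (gog_hrev X (gob_rho B z) h))) \<and>
     (\<forall>v\<in>bverts B. \<forall>b\<in>gob_set B v. gob_csrc B v b = b \<and> gob_crev B v b = b)"

text \<open>The biset (disjoint union over e) of G_{lambda v} \<otimes>_{G_{lambda e}} B_e,
  as a quotient of triples (e, g, b).\<close>

definition fib_dom ::
  "('z, 'y, 'x, 'b, 'g, 'h) gob \<Rightarrow> ('y, 'g) gog \<Rightarrow> 'z \<Rightarrow> 'x \<Rightarrow> ('z \<times> 'g \<times> 'b) set" where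
  "fib_dom B Y v f = {(e, g, b). e \<in> bedges B \<and> gob_rho B e = f \<and> gob_src B e = v \<and>
                        g \<in> carrier (gog_grp Y (gob_lam B v)) \<and> b \<in> gob_set B e}"

definition fib_rel ::
  "('z, 'y, 'x, 'b, 'g, 'h) gob \<Rightarrow> ('y, 'g) gog \<Rightarrow> 'z \<Rightarrow> 'x \<Rightarrow> (('z \<times> 'g \<times> 'b) \<times> ('z \<times> 'g \<times> 'b)) set" where
  "fib_rel B Y v f = eqc (fib_dom B Y v f)
     {((e, g \<otimes>\<^bsub>gog_grp Y (gob_lam B v)\<^esub> gog_hsrc Y (gob_lam B e) k, b), (e, g, gob_lact B e k b))
       | e g k b. k \<in> carrier (gog_grp Y (gob_lam B e))}"

definition fib_map :: "('z, 'y, 'x, 'b, 'g, 'h) gob \<Rightarrow> 'z \<Rightarrow> ('z \<times> 'g \<times> 'b) \<Rightarrow> 'b" where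
  "fib_map B v = (\<lambda>(e, g, b). gob_lact B v g (gob_csrc B e b))"

definition left_fibrant ::
  "('z, 'y, 'x, 'b, 'g, 'h) gob \<Rightarrow> ('y, 'g) gog \<Rightarrow> ('x, 'h) gog \<Rightarrow> bool" where
  "left_fibrant B Y X \<longleftrightarrow>
     (\<forall>e\<in>bedges B. gob_rho B e \<in> gedges X) \<and>
     (\<forall>v\<in>bverts B. \<forall>f\<in>gedges X. gog_src X f = gob_rho B v \<longrightarrow>
        bij_betw (\<lambda>c. the_elem (fib_map B v ` c))
                 (fib_dom B Y v f // fib_rel B Y v f) (gob_set B v))"

text \<open>Elements are represented by tuples (z, q, b, p) standing for q \<otimes> b \<otimes> p.\<close>

definition fb_dom ::
  "('z, 'y, 'x, 'b, 'g, 'h) gob \<Rightarrow> ('y, 'g) gog \<Rightarrow> ('x, 'h) gog \<Rightarrow> 'y \<Rightarrow> 'x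
   \<Rightarrow> ('z \<times> ('y, 'g) letter list \<times> 'b \<times> ('x, 'h) letter list) set" where
  "fb_dom B Y X d s = {(z, q, b, p). z \<in> bverts B \<and> valid_word Y q d (gob_lam B z) \<and>
                          b \<in> gob_set B z \<and> valid_word X p (gob_rho B z) s}"

definition fb_gen ::
  "('z, 'y, 'x, 'b, 'g, 'h) gob \<Rightarrow> ('y, 'g) gog \<Rightarrow> ('x, 'h) gog
   \<Rightarrow> (('z \<times> ('y, 'g) letter list \<times> 'b \<times> ('x, 'h) letter list) \<times>
       ('z \<times> ('y, 'g) letter list \<times> 'b \<times> ('x, 'h) letter list)) set" where
  "fb_gen B Y X =
     {((z, q, b, p), (z, q', b, p)) | z q q' b p. (q, q') \<in> word_step Y} \<union>
     {((z, q, b, p), (z, q, b, p')) | z q b p p'. (p, p') \<in> word_step X} \<union>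
     {((z, q @ [Elt (gob_lam B z) g], b, p), (z, q, gob_lact B z g b, p)) | z q g b p. True} \<union>
     {((z, q, gob_ract B z b h, p), (z, q, b, Elt (gob_rho B z) h # p)) | z q b h p. True} \<union>
     {((gob_src B e, q, gob_csrc B e b, p),
       (btgt B e, q @ [Gen (gob_lam B e)], bplus B e b, Gen (gog_rev X (gob_rho B e)) # p))
       | e q b p. e \<in> bedges B \<and> b \<in> gob_set B e}"

definition fb_rel ::
  "('z, 'y, 'x, 'b, 'g, 'h) gob \<Rightarrow> ('y, 'g) gog \<Rightarrow> ('x, 'h) gog \<Rightarrow> 'y \<Rightarrow> 'x
   \<Rightarrow> (('z \<times> ('y, 'g) letter list \<times> 'b \<times> ('x, 'h) letter list) \<times>
       ('z \<times> ('y, 'g) letter list \<times> 'b \<times> ('x, 'h) letter list)) set" where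
  "fb_rel B Y X d s = eqc (fb_dom B Y X d s) (fb_gen B Y X)"

definition fund_biset ::
  "('z, 'y, 'x, 'b, 'g, 'h) gob \<Rightarrow> ('y, 'g) gog \<Rightarrow> ('x, 'h) gog \<Rightarrow> 'y \<Rightarrow> 'x
   \<Rightarrow> ('z \<times> ('y, 'g) letter list \<times> 'b \<times> ('x, 'h) letter list) set set" where
  "fund_biset B Y X d s = fb_dom B Y X d s // fb_rel B Y X d s"

definition nat_map ::
  "('z, 'y, 'x, 'b, 'g, 'h) gob \<Rightarrow> ('y, 'g) gog \<Rightarrow> ('x, 'h) gog \<Rightarrow> 'z \<Rightarrow> 'b
   \<Rightarrow> ('z \<times> ('y, 'g) letter list \<times> 'b \<times> ('x, 'h) letter list) set" where
  "nat_map B Y X z b = fb_rel B Y X (gob_lam B z) (gob_rho B z) `` {(z, [], b, [])}"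

end

theory Submission
  imports Defs
begin

text \<open>Left-fibrancy lets an edge of \<open>X\<close> standing to the right of an element of \<open>B\<^sub>w\<close> be moved
  to the left, where it becomes an edge of \<open>Y\<close>; so every element \<open>1 \<otimes> c \<otimes> p\<close> of the fundamental
  biset can be rewritten as \<open>q \<otimes> c' \<otimes> 1\<close>. When the maps \<open>G\<^sub>y \<rightarrow> G\<^bsub>y\<^sup>-\<^esub>\<close> are injective,
  such left parts have unique reduced normal forms in the style of Britton's lemma, and \<open>\<pi>\<^sub>1(Y)\<close> acts
  on them. The resulting normal form of \<open>q \<otimes> c \<otimes> p\<close> is invariant under all defining relations of
  \<open>\<pi>\<^sub>1(B, \<lambda>(z), \<rho>(z))\<close> and is \<open>([], z, b)\<close> for \<open>1 \<otimes> b \<otimes> 1\<close>, so \<open>b\<close> is determined by its class.\<close>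

section \<open>Coset representatives\<close>

context group
begin

lemma mult_inv_cancel_left: "x \<in> carrier G \<Longrightarrow> y \<in> carrier G \<Longrightarrow> x \<otimes> (inv x \<otimes> y) = y"
  by (simp add: m_assoc[symmetric])

definition coset_rep :: "'a set \<Rightarrow> 'a \<Rightarrow> 'a" where
  "coset_rep S a = (if a \<in> S then \<one> else (SOME t. t \<in> carrier G \<and> inv t \<otimes> a \<in> S))"

context
  fixes S assumes S: "subgroup S G"
begin

interpretation subgroup S G by (rule S)

lemma coset_rep_closed:
  assumes "a \<in> carrier G"
  shows "coset_rep S a \<in> carrier G" and "inv (coset_rep S a) \<otimes> a \<in> S"
proof -
  have "\<exists>t. t \<in> carrier G \<and> inv t \<otimes> a \<in> S"
    using assms by (intro exI[of _ a]) simp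
  from someI_ex[OF this] assms
  show "coset_rep S a \<in> carrier G" "inv (coset_rep S a) \<otimes> a \<in> S"
    unfolding coset_rep_def by auto
qed

lemma coset_rep_cong:
  assumes a: "a \<in> carrier G" and b: "b \<in> carrier G" and ab: "inv a \<otimes> b \<in> S"
  shows "coset_rep S a = coset_rep S b"
proof -
  have ba: "inv b \<otimes> a \<in> S"
    using m_inv_closed[OF ab] a b by (simp add: inv_mult_group)
  have "x \<otimes> (inv x \<otimes> y) \<in> S" if "x \<in> S" "inv x \<otimes> y \<in> S" for x y
    using that by simp
  then have "a \<in> S \<longleftrightarrow> b \<in> S"
    using ab ba a b by (metis mult_inv_cancel_left)
  moreover have "inv t \<otimes> a \<in> S \<longleftrightarrow> inv t \<otimes> b \<in> S" if t: "t \<in> carrier G" for t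
  proof -
    have "inv t \<otimes> b = (inv t \<otimes> a) \<otimes> (inv a \<otimes> b)" "inv t \<otimes> a = (inv t \<otimes> b) \<otimes> (inv b \<otimes> a)"
      using t a b by (simp_all add: m_assoc mult_inv_cancel_left)
    then show ?thesis using ab ba by (metis m_closed)
  qed
  ultimately show ?thesis
    unfolding coset_rep_def by (simp cong: conj_cong)
qed

lemma coset_rep_mult:
  assumes "a \<in> carrier G" and "s \<in> S"
  shows "coset_rep S (a \<otimes> s) = coset_rep S a"
  using assms by (intro coset_rep_cong[symmetric]) (simp_all add: m_assoc[symmetric])

lemma coset_rep_eq_one_iff:
  assumes "a \<in> carrier G"
  shows "coset_rep S a = \<one> \<longleftrightarrow> a \<in> S"
  using coset_rep_closed[OF assms] assms by (auto simp: coset_rep_def)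

lemma coset_rep_one: "coset_rep S \<one> = \<one>"
  by (simp add: coset_rep_def)

lemma coset_rep_idem:
  assumes "a \<in> carrier G"
  shows "coset_rep S (coset_rep S a) = coset_rep S a"
proof (rule coset_rep_cong[symmetric])
  have "inv (inv (coset_rep S a) \<otimes> a) \<in> S"
    using coset_rep_closed[OF assms] by simp
  then show "inv a \<otimes> coset_rep S a \<in> S"
    using coset_rep_closed(1)[OF assms] assms by (simp add: inv_mult_group)
qed (use coset_rep_closed[OF assms] assms in auto)

lemma coset_rep_mult_left_eq_one_iff:
  assumes "m \<in> S" and "t \<in> carrier G"
  shows "coset_rep S (m \<otimes> t) = \<one> \<longleftrightarrow> coset_rep S t = \<one>"
proof -
  have "m \<otimes> t \<in> S \<longleftrightarrow> t \<in> S"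
    using assms m_closed[OF m_inv_closed[OF \<open>m \<in> S\<close>], of "m \<otimes> t"]
    by (auto simp: m_assoc[symmetric])
  then show ?thesis
    using assms by (simp add: coset_rep_eq_one_iff)
qed

end
end

context group_hom
begin

abbreviation "img_rep \<equiv> H.coset_rep (h ` carrier G)"

definition coset_coord :: "'c \<Rightarrow> 'a" where
  "coset_coord a = the_inv_into (carrier G) h (inv\<^bsub>H\<^esub> img_rep a \<otimes>\<^bsub>H\<^esub> a)"

context
  assumes inj: "inj_on h (carrier G)"
begin

lemma coset_decomp:
  assumes "a \<in> carrier H"
  shows "coset_coord a \<in> carrier G" and "img_rep a \<otimes>\<^bsub>H\<^esub> h (coset_coord a) = a"
proof -
  have "inv\<^bsub>H\<^esub> img_rep a \<otimes>\<^bsub>H\<^esub> a \<in> h ` carrier G"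
    using H.coset_rep_closed(2)[OF img_is_subgroup assms] .
  then show "coset_coord a \<in> carrier G" "img_rep a \<otimes>\<^bsub>H\<^esub> h (coset_coord a) = a"
    unfolding coset_coord_def
    using the_inv_into_into[OF inj] f_the_inv_into_f[OF inj]
      H.coset_rep_closed(1)[OF img_is_subgroup assms] assms
    by (auto simp: H.mult_inv_cancel_left)
qed

lemma coset_decomp_unique:
  assumes t: "t \<in> carrier H" "img_rep t = t" and k: "k \<in> carrier G"
  shows "img_rep (t \<otimes>\<^bsub>H\<^esub> h k) = t" and "coset_coord (t \<otimes>\<^bsub>H\<^esub> h k) = k"
proof -
  show r: "img_rep (t \<otimes>\<^bsub>H\<^esub> h k) = t"
    using H.coset_rep_mult[OF img_is_subgroup t(1)] k t(2) by simp
  show "coset_coord (t \<otimes>\<^bsub>H\<^esub> h k) = k"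
    unfolding coset_coord_def r using t(1) k by (simp add: H.m_assoc[symmetric] the_inv_into_f_f[OF inj])
qed

lemma coset_coord_of_rep:
  assumes "t \<in> carrier H" "img_rep t = t"
  shows "coset_coord t = \<one>\<^bsub>G\<^esub>"
  using coset_decomp_unique(2)[OF assms G.one_closed] assms by simp

lemma coset_coord_mult:
  assumes a: "a \<in> carrier H" and g: "g \<in> carrier H"
  shows "img_rep (g \<otimes>\<^bsub>H\<^esub> a) = img_rep (g \<otimes>\<^bsub>H\<^esub> img_rep a)"
    and "coset_coord (g \<otimes>\<^bsub>H\<^esub> a) = coset_coord (g \<otimes>\<^bsub>H\<^esub> img_rep a) \<otimes>\<^bsub>G\<^esub> coset_coord a"
proof -
  let ?r = "img_rep a" and ?k = "coset_coord a"
  let ?a' = "g \<otimes>\<^bsub>H\<^esub> ?r"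
  let ?r' = "img_rep ?a'" and ?k' = "coset_coord ?a'"
  have r: "?r \<in> carrier H"
    using H.coset_rep_closed(1)[OF img_is_subgroup a] .
  have k: "?k \<in> carrier G" and a_eq: "?r \<otimes>\<^bsub>H\<^esub> h ?k = a"
    using coset_decomp[OF a] by auto
  have a': "?a' \<in> carrier H"
    using g r by simp
  have k': "?k' \<in> carrier G" and a'_eq: "?r' \<otimes>\<^bsub>H\<^esub> h ?k' = ?a'"
    using coset_decomp[OF a'] by auto
  have r': "?r' \<in> carrier H" "img_rep ?r' = ?r'"
    using H.coset_rep_closed(1)[OF img_is_subgroup a'] H.coset_rep_idem[OF img_is_subgroup a'] by auto
  have "g \<otimes>\<^bsub>H\<^esub> a = g \<otimes>\<^bsub>H\<^esub> (?r \<otimes>\<^bsub>H\<^esub> h ?k)"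
    using a_eq by simp
  also have "\<dots> = ?a' \<otimes>\<^bsub>H\<^esub> h ?k"
    using g r k by (simp add: H.m_assoc)
  also have "\<dots> = (?r' \<otimes>\<^bsub>H\<^esub> h ?k') \<otimes>\<^bsub>H\<^esub> h ?k"
    using a'_eq by simp
  also have "\<dots> = ?r' \<otimes>\<^bsub>H\<^esub> h (?k' \<otimes>\<^bsub>G\<^esub> ?k)"
    using r' k' k by (simp add: H.m_assoc)
  finally have ga: "g \<otimes>\<^bsub>H\<^esub> a = ?r' \<otimes>\<^bsub>H\<^esub> h (?k' \<otimes>\<^bsub>G\<^esub> ?k)" .
  show "img_rep (g \<otimes>\<^bsub>H\<^esub> a) = ?r'" "coset_coord (g \<otimes>\<^bsub>H\<^esub> a) = ?k' \<otimes>\<^bsub>G\<^esub> ?k"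
    unfolding ga using coset_decomp_unique[OF r' G.m_closed[OF k' k]] by auto
qed

end
end

section \<open>Equivalence closures and quotients\<close>

lemma equiv_eqc: "equiv A (eqc A r)"
proof -
  let ?s = "(r \<inter> A \<times> A) \<union> (r \<inter> A \<times> A)\<inverse>"
  have "?s\<^sup>+ \<subseteq> A \<times> A"
    by (rule trancl_subset_Sigma) auto
  moreover have "sym (?s\<^sup>+)"
    by (rule sym_trancl) (auto simp: sym_def)
  moreover have "trans (?s\<^sup>+)"
    by (rule trans_trancl)
  ultimately show ?thesis
    unfolding equiv_def refl_on_def eqc_def sym_def trans_def by blast
qed

lemma eqc_invariant:
  assumes F: "\<And>a b. (a, b) \<in> r \<Longrightarrow> a \<in> A \<Longrightarrow> b \<in> A \<Longrightarrow> F a = F b"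
    and ab: "(a, b) \<in> eqc A r"
  shows "F a = F b"
proof -
  have "F a = F b" if "(a, b) \<in> ((r \<inter> A \<times> A) \<union> (r \<inter> A \<times> A)\<inverse>)\<^sup>+"
    using that by (induction rule: trancl_induct) (use F in auto)
  then show ?thesis
    using ab unfolding eqc_def by auto
qed

lemma the_elem_image_equiv_class:
  assumes "equiv A R" "f respects R" "a \<in> A"
  shows "the_elem (f ` (R `` {a})) = f a"
proof -
  have "f ` (R `` {a}) = {f a}"
  proof
    show "f ` (R `` {a}) \<subseteq> {f a}"
    proof
      fix y
      assume "y \<in> f ` (R `` {a})"
      then obtain z where "(a, z) \<in> R" "y = f z"
        by blast
      then show "y \<in> {f a}"
        using congruentD[OF assms(2) \<open>(a, z) \<in> R\<close>] by simp
    qed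
    show "{f a} \<subseteq> f ` (R `` {a})"
      using equiv_class_self[OF assms(1,3)] by auto
  qed
  then show ?thesis by simp
qed

lemma quotient_map_bijD:
  assumes R: "equiv A R" and f: "f respects R"
    and bij: "bij_betw (\<lambda>C. the_elem (f ` C)) (A // R) S"
  shows "s \<in> S \<Longrightarrow> \<exists>a\<in>A. f a = s"
    and "a \<in> A \<Longrightarrow> b \<in> A \<Longrightarrow> f a = f b \<Longrightarrow> (a, b) \<in> R"
proof -
  show "\<exists>a\<in>A. f a = s" if s: "s \<in> S"
  proof -
    obtain C where "C \<in> A // R" "s = the_elem (f ` C)"
      using s bij unfolding bij_betw_def by blast
    moreover from this(1) obtain a where "a \<in> A" "C = R `` {a}"
      by (rule quotientE)
    ultimately show ?thesis
      using the_elem_image_equiv_class[OF R f] by auto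
  qed
  show "(a, b) \<in> R" if ab: "a \<in> A" "b \<in> A" "f a = f b"
  proof -
    have "the_elem (f ` (R `` {a})) = the_elem (f ` (R `` {b}))"
      using the_elem_image_equiv_class[OF R f] ab by simp
    then have "R `` {a} = R `` {b}"
      using inj_onD[OF bij_betw_imp_inj_on[OF bij], of "R `` {a}" "R `` {b}"]
        quotientI[OF ab(1)] quotientI[OF ab(2)] by simp
    then show ?thesis
      using eq_equiv_class_iff[OF R ab(1,2)] by simp
  qed
qed

section \<open>Graphs of groups and graphs of bisets\<close>

lemma is_graph_rev_edge:
  assumes "is_graph X s r" "x \<in> X" "s x \<noteq> x"
  shows "r x \<in> X" "s (r x) \<noteq> r x"
  using assms unfolding is_graph_def by metis+

context
  fixes \<Gamma> :: "('x, 'g) gog"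
  assumes \<Gamma>: "graph_of_groups \<Gamma>"
begin

lemma graph_of_groupsD:
  assumes "x \<in> gog_car \<Gamma>"
  shows "gog_src \<Gamma> x \<in> gog_car \<Gamma>" "gog_rev \<Gamma> x \<in> gog_car \<Gamma>"
    "gog_src \<Gamma> (gog_src \<Gamma> x) = gog_src \<Gamma> x" "gog_rev \<Gamma> (gog_rev \<Gamma> x) = x"
    "x = gog_src \<Gamma> x \<longleftrightarrow> x = gog_rev \<Gamma> x"
    "group (gog_grp \<Gamma> x)"
    "gog_hsrc \<Gamma> x \<in> hom (gog_grp \<Gamma> x) (gog_grp \<Gamma> (gog_src \<Gamma> x))"
    "gog_hrev \<Gamma> x \<in> hom (gog_grp \<Gamma> x) (gog_grp \<Gamma> (gog_rev \<Gamma> x))"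
    "\<And>g. g \<in> carrier (gog_grp \<Gamma> x) \<Longrightarrow> gog_hrev \<Gamma> (gog_rev \<Gamma> x) (gog_hrev \<Gamma> x g) = g"
  using \<Gamma> assms unfolding graph_of_groups_def is_graph_def by auto

lemma gog_vertex_maps:
  assumes "x \<in> gog_car \<Gamma>" "gog_src \<Gamma> x = x" "g \<in> carrier (gog_grp \<Gamma> x)"
  shows "gog_hsrc \<Gamma> x g = g" "gog_hrev \<Gamma> x g = g" "hplus \<Gamma> x g = g"
proof -
  have "gog_rev \<Gamma> x = x"
    using graph_of_groupsD(5)[OF assms(1)] assms(2) by simp
  then show "gog_hsrc \<Gamma> x g = g" "gog_hrev \<Gamma> x g = g" "hplus \<Gamma> x g = g"
    using \<Gamma> assms unfolding graph_of_groups_def gverts_def verts_def hplus_def by auto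
qed

lemma gog_src_hom: "x \<in> gog_car \<Gamma> \<Longrightarrow> group_hom (gog_grp \<Gamma> x) (gog_grp \<Gamma> (gog_src \<Gamma> x)) (gog_hsrc \<Gamma> x)"
  unfolding group_hom_def group_hom_axioms_def using graph_of_groupsD by blast

lemma gog_rev_hom: "x \<in> gog_car \<Gamma> \<Longrightarrow> group_hom (gog_grp \<Gamma> x) (gog_grp \<Gamma> (gog_rev \<Gamma> x)) (gog_hrev \<Gamma> x)"
  unfolding group_hom_def group_hom_axioms_def using graph_of_groupsD by blast

lemma gtgt_rev: "x \<in> gog_car \<Gamma> \<Longrightarrow> gtgt \<Gamma> (gog_rev \<Gamma> x) = gog_src \<Gamma> x"
  unfolding gtgt_def using graph_of_groupsD(4) by simp

lemma gtgt_vertex: "x \<in> gog_car \<Gamma> \<Longrightarrow> gog_src \<Gamma> x = x \<Longrightarrow> gtgt \<Gamma> x = x"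
  unfolding gtgt_def using graph_of_groupsD(5) by metis

lemma gedges_rev: "x \<in> gedges \<Gamma> \<Longrightarrow> gog_rev \<Gamma> x \<in> gedges \<Gamma>"
  using \<Gamma> is_graph_rev_edge unfolding graph_of_groups_def gedges_def edges_def by fastforce

lemma hplus_hom:
  assumes "x \<in> gog_car \<Gamma>"
  shows "group_hom (gog_grp \<Gamma> x) (gog_grp \<Gamma> (gtgt \<Gamma> x)) (hplus \<Gamma> x)"
proof -
  have "hplus \<Gamma> x = gog_hsrc \<Gamma> (gog_rev \<Gamma> x) \<circ> gog_hrev \<Gamma> x"
    by (rule ext) (simp add: hplus_def)
  then have "hplus \<Gamma> x \<in> hom (gog_grp \<Gamma> x) (gog_grp \<Gamma> (gtgt \<Gamma> x))"
    using hom_compose[OF graph_of_groupsD(8) graph_of_groupsD(7)[OF graph_of_groupsD(2)]] assms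
    by (simp add: gtgt_def)
  then show ?thesis
    using assms graph_of_groupsD(6) graph_of_groupsD(6)[OF graph_of_groupsD(1)[OF graph_of_groupsD(2)]]
    unfolding group_hom_def group_hom_axioms_def gtgt_def by blast
qed

lemma hplus_in_image:
  "x \<in> gog_car \<Gamma> \<Longrightarrow> k \<in> carrier (gog_grp \<Gamma> x)
   \<Longrightarrow> hplus \<Gamma> x k \<in> gog_hsrc \<Gamma> (gog_rev \<Gamma> x) ` carrier (gog_grp \<Gamma> (gog_rev \<Gamma> x))"
  unfolding hplus_def using group_hom.hom_closed[OF gog_rev_hom] by blast

lemma hplus_rev:
  "x \<in> gog_car \<Gamma> \<Longrightarrow> g \<in> carrier (gog_grp \<Gamma> x) \<Longrightarrow> hplus \<Gamma> (gog_rev \<Gamma> x) (gog_hrev \<Gamma> x g) = gog_hsrc \<Gamma> x g"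
  unfolding hplus_def using graph_of_groupsD by simp

lemma valid_word_start: "valid_word \<Gamma> ws v w \<Longrightarrow> v \<in> gverts \<Gamma>"
proof (induction ws arbitrary: v)
  case (Cons l ws)
  then show ?case
    by (cases l) (auto simp: gverts_def verts_def dest: graph_of_groupsD(1,3))
qed simp

lemma valid_word_append:
  "valid_word \<Gamma> (a @ b) v w \<longleftrightarrow> (\<exists>m. valid_word \<Gamma> a v m \<and> valid_word \<Gamma> b m w)"
proof (induction a arbitrary: v)
  case Nil
  show ?case using valid_word_start by auto
next
  case (Cons l a)
  then show ?case by (cases l) auto
qed

end

lemma is_bisetD:
  assumes "is_biset G H S la ra"
  shows biset_lact_closed: "g \<in> carrier G \<Longrightarrow> b \<in> S \<Longrightarrow> la g b \<in> S"
    and biset_ract_closed: "b \<in> S \<Longrightarrow> h \<in> carrier H \<Longrightarrow> ra b h \<in> S"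
    and biset_lact_one: "b \<in> S \<Longrightarrow> la \<one>\<^bsub>G\<^esub> b = b"
    and biset_ract_one: "b \<in> S \<Longrightarrow> ra b \<one>\<^bsub>H\<^esub> = b"
    and biset_lact_mult: "g \<in> carrier G \<Longrightarrow> g' \<in> carrier G \<Longrightarrow> b \<in> S \<Longrightarrow> la (g \<otimes>\<^bsub>G\<^esub> g') b = la g (la g' b)"
    and biset_ract_mult: "h \<in> carrier H \<Longrightarrow> h' \<in> carrier H \<Longrightarrow> b \<in> S \<Longrightarrow> ra b (h \<otimes>\<^bsub>H\<^esub> h') = ra (ra b h) h'"
    and biset_lact_ract: "g \<in> carrier G \<Longrightarrow> h \<in> carrier H \<Longrightarrow> b \<in> S \<Longrightarrow> la g (ra b h) = ra (la g b) h"
  using assms unfolding is_biset_def by blast+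

lemma fb_gen_cases [consumes 1, case_names Y_step X_step left right edge]:
  assumes "(x1, x2) \<in> fb_gen B Y X"
  obtains
    (Y_step) z q q' b p where "(x1, x2) = ((z, q, b, p), (z, q', b, p))" "(q, q') \<in> word_step Y"
  | (X_step) z q b p p' where "(x1, x2) = ((z, q, b, p), (z, q, b, p'))" "(p, p') \<in> word_step X"
  | (left) z q g b p where "(x1, x2) = ((z, q @ [Elt (gob_lam B z) g], b, p), (z, q, gob_lact B z g b, p))"
  | (right) z q b h p where "(x1, x2) = ((z, q, gob_ract B z b h, p), (z, q, b, Elt (gob_rho B z) h # p))"
  | (edge) e q b p where "(x1, x2) = ((gob_src B e, q, gob_csrc B e b, p),
        (btgt B e, q @ [Gen (gob_lam B e)], bplus B e b, Gen (gog_rev X (gob_rho B e)) # p))"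
      "e \<in> bedges B" "b \<in> gob_set B e"
  using assms unfolding fb_gen_def
  apply (elim UnE CollectE exE conjE)
      apply (erule (1) that(1))
     apply (erule (1) that(2))
    apply (erule that(3))
   apply (erule that(4))
  apply (erule (2) that(5))
  done

locale biset_graph =
  fixes B :: "('z, 'y, 'x, 'b, 'g, 'h) gob" and Y :: "('y, 'g) gog" and X :: "('x, 'h) gog"
  assumes gob: "graph_of_bisets B Y X"
begin

abbreviation "GG x \<equiv> gog_grp Y x"
abbreviation "sm x \<equiv> gog_hsrc Y x"
abbreviation "sY \<equiv> gog_src Y"
abbreviation "rY \<equiv> gog_rev Y"

lemma gog_Y: "graph_of_groups Y" and gog_X: "graph_of_groups X"
  using gob unfolding graph_of_bisets_def by auto

lemmas Y_gogD = graph_of_groupsD[OF gog_Y]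
lemmas X_gogD = graph_of_groupsD[OF gog_X]

lemma src_group: "x \<in> gog_car Y \<Longrightarrow> group (GG (sY x))"
  using Y_gogD(1,6) by blast

lemma B_graph: "is_graph (gob_car B) (gob_src B) (gob_rev B)"
  using gob unfolding graph_of_bisets_def by blast

lemma B_eltD:
  assumes "z \<in> gob_car B"
  shows "gob_src B z \<in> gob_car B" "gob_rev B z \<in> gob_car B"
    "gob_src B (gob_src B z) = gob_src B z" "gob_rev B (gob_rev B z) = z"
    "gob_lam B z \<in> gog_car Y" "gob_lam B (gob_src B z) = sY (gob_lam B z)"
    "gob_lam B (gob_rev B z) = rY (gob_lam B z)"
    "gob_rho B z \<in> gog_car X" "gob_rho B (gob_src B z) = gog_src X (gob_rho B z)"
    "gob_rho B (gob_rev B z) = gog_rev X (gob_rho B z)"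
    "is_biset (GG (gob_lam B z)) (gog_grp X (gob_rho B z)) (gob_set B z) (gob_lact B z) (gob_ract B z)"
  using assms gob unfolding graph_of_bisets_def is_graph_def graph_morphism_def by blast+

lemma B_congruenceD:
  assumes "z \<in> gob_car B" "b \<in> gob_set B z"
  shows "gob_csrc B z b \<in> gob_set B (gob_src B z)" "gob_crev B z b \<in> gob_set B (gob_rev B z)"
    "gob_crev B (gob_rev B z) (gob_crev B z b) = b"
    "g \<in> carrier (GG (gob_lam B z)) \<Longrightarrow>
       gob_csrc B z (gob_lact B z g b) = gob_lact B (gob_src B z) (sm (gob_lam B z) g) (gob_csrc B z b)"
    "g \<in> carrier (GG (gob_lam B z)) \<Longrightarrow>
       gob_crev B z (gob_lact B z g b) = gob_lact B (gob_rev B z) (gog_hrev Y (gob_lam B z) g) (gob_crev B z b)"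
    "h \<in> carrier (gog_grp X (gob_rho B z)) \<Longrightarrow>
       gob_csrc B z (gob_ract B z b h) = gob_ract B (gob_src B z) (gob_csrc B z b) (gog_hsrc X (gob_rho B z) h)"
    "h \<in> carrier (gog_grp X (gob_rho B z)) \<Longrightarrow>
       gob_crev B z (gob_ract B z b h) = gob_ract B (gob_rev B z) (gob_crev B z b) (gog_hrev X (gob_rho B z) h)"
  using assms gob unfolding graph_of_bisets_def by blast+

lemma bverts_biset:
  "w \<in> bverts B \<Longrightarrow>
   is_biset (GG (gob_lam B w)) (gog_grp X (gob_rho B w)) (gob_set B w) (gob_lact B w) (gob_ract B w)"
  using B_eltD(11) unfolding bverts_def verts_def by blast

lemma bverts_images:
  assumes "w \<in> bverts B"
  shows "gob_lam B w \<in> gverts Y" "gob_rho B w \<in> gverts X"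
  using assms B_eltD(5,6,8,9) unfolding bverts_def verts_def gverts_def by force+

lemma bverts_group: "w \<in> bverts B \<Longrightarrow> group (GG (gob_lam B w))"
  using bverts_images(1) Y_gogD(6) unfolding gverts_def verts_def by blast

lemma bedgesD: "e \<in> bedges B \<Longrightarrow> e \<in> gob_car B"
  unfolding bedges_def edges_def by simp

lemma bedges_rev: "e \<in> bedges B \<Longrightarrow> gob_rev B e \<in> bedges B"
  using is_graph_rev_edge[OF B_graph] unfolding bedges_def edges_def by blast

lemma src_in_bverts: "e \<in> gob_car B \<Longrightarrow> gob_src B e \<in> bverts B"
  unfolding bverts_def verts_def using B_eltD(1,3) by simp

lemma btgt_in_bverts: "e \<in> gob_car B \<Longrightarrow> btgt B e \<in> bverts B"
  unfolding btgt_def using src_in_bverts B_eltD(2) by blast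

lemma lam_btgt: "e \<in> gob_car B \<Longrightarrow> gob_lam B (btgt B e) = gtgt Y (gob_lam B e)"
  unfolding btgt_def gtgt_def using B_eltD(2,6,7) by simp

lemma lam_src:
  "e \<in> gob_car B \<Longrightarrow> gob_src B e = w \<Longrightarrow> sY (gob_lam B e) = gob_lam B w"
  using B_eltD(6) by metis

lemma rho_btgt: "e \<in> gob_car B \<Longrightarrow> gob_rho B (btgt B e) = gtgt X (gob_rho B e)"
  unfolding btgt_def gtgt_def using B_eltD(2,9,10) by simp

lemma bplus_closed: "e \<in> gob_car B \<Longrightarrow> b \<in> gob_set B e \<Longrightarrow> bplus B e b \<in> gob_set B (btgt B e)"
  unfolding bplus_def btgt_def using B_eltD(2) B_congruenceD(1,2) by blast

lemma bplus_lact: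
  assumes e: "e \<in> gob_car B" and k: "k \<in> carrier (GG (gob_lam B e))" and b: "b \<in> gob_set B e"
  shows "bplus B e (gob_lact B e k b) = gob_lact B (btgt B e) (hplus Y (gob_lam B e) k) (bplus B e b)"
proof -
  have "gog_hrev Y (gob_lam B e) k \<in> carrier (GG (gob_lam B (gob_rev B e)))"
    using group_hom.hom_closed[OF gog_rev_hom[OF gog_Y B_eltD(5)[OF e]] k] B_eltD(7)[OF e] by simp
  then show ?thesis
    unfolding bplus_def btgt_def hplus_def
    using B_congruenceD(5)[OF e b k] B_congruenceD(4)[OF B_eltD(2)[OF e] B_congruenceD(2)[OF e b]]
      B_eltD(7)[OF e] by simp
qed

lemma bplus_ract:
  assumes e: "e \<in> gob_car B" and h: "h \<in> carrier (gog_grp X (gob_rho B e))" and b: "b \<in> gob_set B e"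
  shows "bplus B e (gob_ract B e b h) = gob_ract B (btgt B e) (bplus B e b) (hplus X (gob_rho B e) h)"
proof -
  have "gog_hrev X (gob_rho B e) h \<in> carrier (gog_grp X (gob_rho B (gob_rev B e)))"
    using group_hom.hom_closed[OF gog_rev_hom[OF gog_X B_eltD(8)[OF e]] h] B_eltD(10)[OF e] by simp
  then show ?thesis
    unfolding bplus_def btgt_def hplus_def
    using B_congruenceD(7)[OF e b h] B_congruenceD(6)[OF B_eltD(2)[OF e] B_congruenceD(2)[OF e b]]
      B_eltD(10)[OF e] by simp
qed

lemma bplus_rev: "e \<in> gob_car B \<Longrightarrow> b \<in> gob_set B e \<Longrightarrow> bplus B (gob_rev B e) (gob_crev B e b) = gob_csrc B e b"
  unfolding bplus_def using B_eltD(4) B_congruenceD(3) by simp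

lemma fib_domD:
  assumes "(e, g, b) \<in> fib_dom B Y w f"
  shows "e \<in> bedges B" "e \<in> gob_car B" "gob_rho B e = f" "gob_src B e = w"
    "g \<in> carrier (GG (gob_lam B w))" "b \<in> gob_set B e"
  using assms unfolding fib_dom_def bedges_def edges_def by auto

lemma fib_domI:
  "e \<in> bedges B \<Longrightarrow> gob_rho B e = f \<Longrightarrow> gob_src B e = w \<Longrightarrow> g \<in> carrier (GG (gob_lam B w))
   \<Longrightarrow> b \<in> gob_set B e \<Longrightarrow> (e, g, b) \<in> fib_dom B Y w f"
  unfolding fib_dom_def by simp

lemma equiv_fib_rel: "equiv (fib_dom B Y w f) (fib_rel B Y w f)"
  unfolding fib_rel_def by (rule equiv_eqc)

lemma fib_rel_invariant:
  assumes "\<And>e g k b. e \<in> bedges B \<Longrightarrow> gob_rho B e = f \<Longrightarrow> gob_src B e = w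
             \<Longrightarrow> g \<in> carrier (GG (gob_lam B w)) \<Longrightarrow> k \<in> carrier (GG (gob_lam B e)) \<Longrightarrow> b \<in> gob_set B e
             \<Longrightarrow> F (e, g \<otimes>\<^bsub>GG (gob_lam B w)\<^esub> sm (gob_lam B e) k, b) = F (e, g, gob_lact B e k b)"
  shows "F respects fib_rel B Y w f"
proof (rule congruentI)
  fix y1 y2
  assume "(y1, y2) \<in> fib_rel B Y w f"
  then show "F y1 = F y2"
    unfolding fib_rel_def
  proof (rule eqc_invariant[rotated])
    fix a a'
    assume "(a, a') \<in> {((e, g \<otimes>\<^bsub>GG (gob_lam B w)\<^esub> sm (gob_lam B e) k, b), (e, g, gob_lact B e k b))
       | e g k b. k \<in> carrier (GG (gob_lam B e))}"
      and a: "a \<in> fib_dom B Y w f" and a': "a' \<in> fib_dom B Y w f"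
    then obtain e g k b where eq: "a = (e, g \<otimes>\<^bsub>GG (gob_lam B w)\<^esub> sm (gob_lam B e) k, b)"
      "a' = (e, g, gob_lact B e k b)" and k: "k \<in> carrier (GG (gob_lam B e))"
      by blast
    note d = fib_domD[OF a[unfolded eq(1)]]
    show "F a = F a'"
      unfolding eq by (rule assms[OF d(1,3,4) fib_domD(5)[OF a'[unfolded eq(2)]] k d(6)])
  qed
qed

lemma fib_map_respects:
  assumes w: "w \<in> bverts B"
  shows "fib_map B w respects fib_rel B Y w f"
proof (rule fib_rel_invariant)
  fix e g k b
  assume e: "e \<in> bedges B" "gob_src B e = w" and g: "g \<in> carrier (GG (gob_lam B w))"
    and k: "k \<in> carrier (GG (gob_lam B e))" and b: "b \<in> gob_set B e"
  have ec: "e \<in> gob_car B"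
    using bedgesD[OF e(1)] .
  have sk: "sm (gob_lam B e) k \<in> carrier (GG (gob_lam B w))"
    using group_hom.hom_closed[OF gog_src_hom[OF gog_Y B_eltD(5)[OF ec]] k] lam_src[OF ec e(2)] by simp
  have "gob_lact B w (g \<otimes>\<^bsub>GG (gob_lam B w)\<^esub> sm (gob_lam B e) k) (gob_csrc B e b)
      = gob_lact B w g (gob_lact B w (sm (gob_lam B e) k) (gob_csrc B e b))"
    using biset_lact_mult[OF bverts_biset[OF w] g sk] B_congruenceD(1)[OF ec b] e(2) by simp
  also have "\<dots> = gob_lact B w g (gob_csrc B e (gob_lact B e k b))"
    using B_congruenceD(4)[OF ec b k] e(2) by simp
  finally show "fib_map B w (e, g \<otimes>\<^bsub>GG (gob_lam B w)\<^esub> sm (gob_lam B e) k, b) = fib_map B w (e, g, gob_lact B e k b)"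
    unfolding fib_map_def by simp
qed

lemma fib_dom_target:
  assumes "(e, g, b) \<in> fib_dom B Y w f"
  shows "btgt B e \<in> bverts B" "bplus B e b \<in> gob_set B (btgt B e)"
    "gob_rho B (btgt B e) = gtgt X f" "gob_lam B (btgt B e) = gtgt Y (gob_lam B e)"
    "gob_lam B e \<in> gog_car Y" "sY (gob_lam B e) = gob_lam B w"
  using fib_domD[OF assms] btgt_in_bverts bplus_closed rho_btgt lam_btgt B_eltD(5) lam_src by auto

end

section \<open>Reduced normal forms and the action of \<open>\<pi>\<^sub>1(Y)\<close>\<close>

locale injective_biset_graph = biset_graph B Y X
  for B :: "('z, 'y, 'x, 'b, 'g, 'h) gob" and Y :: "('y, 'g) gog" and X :: "('x, 'h) gog" +
  assumes src_inj: "\<forall>y\<in>gog_car Y. inj_on (gog_hsrc Y y) (carrier (gog_grp Y y))"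
begin

abbreviation rep :: "'y \<Rightarrow> 'g \<Rightarrow> 'g" where
  "rep x \<equiv> group.coset_rep (GG (sY x)) (sm x ` carrier (GG x))"

abbreviation coord :: "'y \<Rightarrow> 'g \<Rightarrow> 'g" where
  "coord x \<equiv> group_hom.coset_coord (GG x) (GG (sY x)) (sm x)"

context
  fixes x assumes x: "x \<in> gog_car Y"
begin

lemma src_image_subgroup: "subgroup (sm x ` carrier (GG x)) (GG (sY x))"
  using group_hom.img_is_subgroup[OF gog_src_hom[OF gog_Y x]] .

lemma rep_closed: "a \<in> carrier (GG (sY x)) \<Longrightarrow> rep x a \<in> carrier (GG (sY x))"
  using group.coset_rep_closed(1)[OF src_group[OF x] src_image_subgroup] .

lemma rep_idem: "a \<in> carrier (GG (sY x)) \<Longrightarrow> rep x (rep x a) = rep x a"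
  using group.coset_rep_idem[OF src_group[OF x] src_image_subgroup] .

lemma rep_one: "rep x \<one>\<^bsub>GG (sY x)\<^esub> = \<one>\<^bsub>GG (sY x)\<^esub>"
  using group.coset_rep_one[OF src_group[OF x] src_image_subgroup] .

lemma rep_mult_left_eq_one_iff:
  "m \<in> sm x ` carrier (GG x) \<Longrightarrow> t \<in> carrier (GG (sY x))
   \<Longrightarrow> rep x (m \<otimes>\<^bsub>GG (sY x)\<^esub> t) = \<one>\<^bsub>GG (sY x)\<^esub> \<longleftrightarrow> rep x t = \<one>\<^bsub>GG (sY x)\<^esub>"
  using group.coset_rep_mult_left_eq_one_iff[OF src_group[OF x] src_image_subgroup] .

lemma src_hom_inj: "inj_on (sm x) (carrier (GG x))"
  using src_inj x by blast

lemmas coord_closed = group_hom.coset_decomp(1)[OF gog_src_hom[OF gog_Y x] src_hom_inj]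
lemmas rep_coord_unique = group_hom.coset_decomp_unique[OF gog_src_hom[OF gog_Y x] src_hom_inj]
lemmas coord_of_rep = group_hom.coset_coord_of_rep[OF gog_src_hom[OF gog_Y x] src_hom_inj]
lemmas rep_coord_mult = group_hom.coset_coord_mult[OF gog_src_hom[OF gog_Y x] src_hom_inj]

end

text \<open>A normal form \<open>(L, w, c)\<close> with \<open>L = [(x\<^sub>1, t\<^sub>1), \<dots>, (x\<^sub>n, t\<^sub>n)]\<close> stands for
  \<open>t\<^sub>1 x\<^sub>1 t\<^sub>2 x\<^sub>2 \<dots> t\<^sub>n x\<^sub>n \<otimes> c\<close> with \<open>c \<in> B\<^sub>w\<close>: each \<open>x\<^sub>i\<close> is an edge of \<open>Y\<close>, each \<open>t\<^sub>i\<close> is the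
  chosen representative of its coset modulo \<open>x\<^sub>i\<^sup>-(G\<^bsub>x\<^sub>i\<^esub>)\<close>, and there is no backtracking
  \<open>x\<^sub>i 1 x\<^sub>i\<^sub>+\<^sub>1\<close> with \<open>x\<^sub>i\<^sub>+\<^sub>1\<close> the reverse of \<open>x\<^sub>i\<close>.\<close>

definition cancels :: "'y \<Rightarrow> ('y \<times> 'g) list \<Rightarrow> bool" where
  "cancels x L \<longleftrightarrow> (case L of [] \<Rightarrow> False | (x', t) # _ \<Rightarrow> x' = rY x \<and> t = \<one>\<^bsub>GG (sY x')\<^esub>)"

fun reduced :: "'y \<Rightarrow> ('y \<times> 'g) list \<Rightarrow> 'y \<Rightarrow> bool" where
  "reduced u [] e \<longleftrightarrow> u = e"
| "reduced u ((x, t) # L) e \<longleftrightarrow>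
     x \<in> gog_car Y \<and> sY x \<noteq> x \<and> sY x = u \<and> t \<in> carrier (GG u) \<and> rep x t = t \<and>
     \<not> cancels x L \<and> reduced (gtgt Y x) L e"

fun nf :: "'y \<Rightarrow> ('y \<times> 'g) list \<times> 'z \<times> 'b \<Rightarrow> bool" where
  "nf u (L, w, c) \<longleftrightarrow> w \<in> bverts B \<and> c \<in> gob_set B w \<and> reduced u L (gob_lam B w)"

text \<open>To multiply by \<open>h\<close>, write \<open>h t\<^sub>1 = t\<^sub>1' x\<^sub>1\<^sup>-(k)\<close> and pass \<open>x\<^sub>1\<^sup>-(k) x\<^sub>1 = x\<^sub>1 x\<^sub>1\<^sup>+(k)\<close>
  on to the rest of the word.\<close>

fun grp_act :: "'g \<Rightarrow> ('y \<times> 'g) list \<times> 'z \<times> 'b \<Rightarrow> ('y \<times> 'g) list \<times> 'z \<times> 'b" where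
  "grp_act h ([], w, c) = ([], w, gob_lact B w h c)"
| "grp_act h ((x, t) # L, p) =
     apfst ((#) (x, rep x (h \<otimes>\<^bsub>GG (sY x)\<^esub> t)))
       (grp_act (hplus Y x (coord x (h \<otimes>\<^bsub>GG (sY x)\<^esub> t))) (L, p))"

lemma grp_act_vertex: "fst (snd (grp_act h (L, w, c))) = w"
proof (induction L arbitrary: h)
  case (Cons xt L)
  then show ?case by (cases xt) simp
qed simp

lemma reduced_ConsD:
  assumes "reduced u ((x, t) # L) e"
  shows "x \<in> gog_car Y" "u = sY x" "t \<in> carrier (GG (sY x))" "rep x t = t"
  using assms by auto

lemma cancels_grp_act:
  assumes x: "x \<in> gog_car Y" and h: "h \<in> sm (rY x) ` carrier (GG (rY x))"
    and L: "reduced (gtgt Y x) L e"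
  shows "cancels x (fst (grp_act h (L, w, c))) \<longleftrightarrow> cancels x L"
proof (cases L)
  case (Cons xt L')
  obtain x' t where xt: "xt = (x', t)" by fastforce
  note t = reduced_ConsD[OF L[unfolded Cons xt]]
  have "rep x' (h \<otimes>\<^bsub>GG (sY x')\<^esub> t) = \<one>\<^bsub>GG (sY x')\<^esub> \<longleftrightarrow> t = \<one>\<^bsub>GG (sY x')\<^esub>"
    if "x' = rY x"
    using rep_mult_left_eq_one_iff[OF t(1) _ t(3)] h that t(4) by auto
  then show ?thesis
    unfolding Cons xt cancels_def by (auto simp: apfst_def map_prod_def split: prod.split)
qed (simp add: cancels_def)

lemma grp_act_nf:
  assumes "nf u n" "h \<in> carrier (GG u)"
  shows "nf u (grp_act h n)"
proof -
  obtain L w c where n: "n = (L, w, c)"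
    by (cases n)
  have "reduced u L (gob_lam B w)" "w \<in> bverts B" "c \<in> gob_set B w"
    using assms(1) n by auto
  then show ?thesis
    unfolding n using assms(2)
  proof (induction L arbitrary: u h)
    case Nil
    then show ?case
      using biset_lact_closed[OF bverts_biset] by auto
  next
    case (Cons xt L)
    obtain x t where xt: "xt = (x, t)" by fastforce
    note red = Cons.prems(1)[unfolded xt]
    note t = reduced_ConsD[OF red]
    let ?a = "h \<otimes>\<^bsub>GG (sY x)\<^esub> t"
    let ?h' = "hplus Y x (coord x ?a)"
    have a: "?a \<in> carrier (GG (sY x))"
      using Cons.prems(4) t group.is_monoid[OF src_group] monoid.m_closed by fastforce
    have k: "coord x ?a \<in> carrier (GG x)"
      using coord_closed[OF t(1) a] .
    have h': "?h' \<in> carrier (GG (gtgt Y x))"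
      using group_hom.hom_closed[OF hplus_hom[OF gog_Y t(1)] k] .
    obtain L' w' c' where R: "grp_act ?h' (L, w, c) = (L', w', c')"
      by (metis prod.exhaust)
    have IH: "nf (gtgt Y x) (L', w', c')"
      using Cons.IH[OF _ Cons.prems(2,3) h'] red R by auto
    have w': "w' = w"
      using grp_act_vertex[of ?h' L w c] R by simp
    have "cancels x L' \<longleftrightarrow> cancels x L"
      using cancels_grp_act[OF t(1) hplus_in_image[OF gog_Y t(1) k], of L "gob_lam B w" w c] red R by simp
    then show ?case
      using IH red w' R rep_closed[OF t(1) a] rep_idem[OF t(1) a] unfolding xt by auto
  qed
qed

lemma grp_act_mult:
  assumes "nf u n" "h \<in> carrier (GG u)" "h' \<in> carrier (GG u)"
  shows "grp_act h (grp_act h' n) = grp_act (h \<otimes>\<^bsub>GG u\<^esub> h') n"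
proof -
  obtain L w c where n: "n = (L, w, c)"
    by (cases n)
  have "reduced u L (gob_lam B w)" "w \<in> bverts B" "c \<in> gob_set B w"
    using assms(1) n by auto
  then show ?thesis
    unfolding n using assms(2,3)
  proof (induction L arbitrary: u h h')
    case Nil
    then show ?case
      using biset_lact_mult[OF bverts_biset] by simp
  next
    case (Cons xt L)
    obtain x t where xt: "xt = (x, t)" by fastforce
    note red = Cons.prems(1)[unfolded xt]
    note t = reduced_ConsD[OF red]
    interpret G: group "GG (sY x)"
      using src_group[OF t(1)] .
    have h: "h \<in> carrier (GG (sY x))" "h' \<in> carrier (GG (sY x))"
      using Cons.prems(4,5) t(2) by auto
    let ?a = "h' \<otimes>\<^bsub>GG (sY x)\<^esub> t"
    let ?a' = "h \<otimes>\<^bsub>GG (sY x)\<^esub> rep x ?a"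
    have a: "?a \<in> carrier (GG (sY x))" "?a' \<in> carrier (GG (sY x))"
      using h t(3) rep_closed[OF t(1)] by auto
    have k: "coord x ?a \<in> carrier (GG x)" "coord x ?a' \<in> carrier (GG x)"
      using coord_closed[OF t(1)] a by auto
    note hp = group_hom.hom_closed[OF hplus_hom[OF gog_Y t(1)]]
    obtain L1 w1 c1 where R1: "grp_act (hplus Y x (coord x ?a)) (L, w, c) = (L1, w1, c1)"
      by (metis prod.exhaust)
    have IH: "grp_act (hplus Y x (coord x ?a')) (L1, w1, c1)
        = grp_act (hplus Y x (coord x ?a' \<otimes>\<^bsub>GG x\<^esub> coord x ?a)) (L, w, c)"
      using Cons.IH[of "gtgt Y x", OF _ Cons.prems(2,3) hp hp, OF _ k(2) k(1)] red R1
        group_hom.hom_mult[OF hplus_hom[OF gog_Y t(1)] k(2,1)] by auto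
    have "h \<otimes>\<^bsub>GG (sY x)\<^esub> ?a = (h \<otimes>\<^bsub>GG (sY x)\<^esub> h') \<otimes>\<^bsub>GG (sY x)\<^esub> t"
      using h t(3) by (simp add: G.m_assoc)
    with rep_coord_mult[OF t(1) a(1) h(1)] have
      "rep x ((h \<otimes>\<^bsub>GG (sY x)\<^esub> h') \<otimes>\<^bsub>GG (sY x)\<^esub> t) = rep x ?a'"
      "coord x ((h \<otimes>\<^bsub>GG (sY x)\<^esub> h') \<otimes>\<^bsub>GG (sY x)\<^esub> t) = coord x ?a' \<otimes>\<^bsub>GG x\<^esub> coord x ?a"
      by simp_all
    then show ?case
      using R1 IH t(2) unfolding xt by simp
  qed
qed

lemma grp_act_one:
  assumes "nf u n"
  shows "grp_act \<one>\<^bsub>GG u\<^esub> n = n"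
proof -
  obtain L w c where n: "n = (L, w, c)"
    by (cases n)
  have "reduced u L (gob_lam B w)" "w \<in> bverts B" "c \<in> gob_set B w"
    using assms(1) n by auto
  then show ?thesis
    unfolding n
  proof (induction L arbitrary: u)
    case Nil
    then show ?case
      using biset_lact_one[OF bverts_biset] by simp
  next
    case (Cons xt L)
    obtain x t where xt: "xt = (x, t)" by fastforce
    note red = Cons.prems(1)[unfolded xt]
    note t = reduced_ConsD[OF red]
    have "coord x t = \<one>\<^bsub>GG x\<^esub>"
      using coord_of_rep[OF t(1) t(3,4)] .
    then show ?case
      using Cons.IH[of "gtgt Y x"] Cons.prems(2,3) red t
        group_hom.hom_one[OF hplus_hom[OF gog_Y t(1)]] group.is_monoid[OF src_group[OF t(1)]]
      unfolding xt by simp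
  qed
qed

lemma rep_coord_of_image:
  assumes x: "x \<in> gog_car Y" and k: "k \<in> carrier (GG x)"
  shows "rep x (sm x k \<otimes>\<^bsub>GG (sY x)\<^esub> \<one>\<^bsub>GG (sY x)\<^esub>) = \<one>\<^bsub>GG (sY x)\<^esub>"
    and "coord x (sm x k \<otimes>\<^bsub>GG (sY x)\<^esub> \<one>\<^bsub>GG (sY x)\<^esub>) = k"
proof -
  interpret G: group "GG (sY x)"
    using src_group[OF x] .
  have "sm x k \<otimes>\<^bsub>GG (sY x)\<^esub> \<one>\<^bsub>GG (sY x)\<^esub> = \<one>\<^bsub>GG (sY x)\<^esub> \<otimes>\<^bsub>GG (sY x)\<^esub> sm x k"
    using group_hom.hom_closed[OF gog_src_hom[OF gog_Y x] k] by simp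
  then show "rep x (sm x k \<otimes>\<^bsub>GG (sY x)\<^esub> \<one>\<^bsub>GG (sY x)\<^esub>) = \<one>\<^bsub>GG (sY x)\<^esub>"
    "coord x (sm x k \<otimes>\<^bsub>GG (sY x)\<^esub> \<one>\<^bsub>GG (sY x)\<^esub>) = k"
    using rep_coord_unique[OF x G.one_closed rep_one[OF x] k] by simp_all
qed

lemma grp_act_image_head:
  "x \<in> gog_car Y \<Longrightarrow> k \<in> carrier (GG x) \<Longrightarrow>
   grp_act (sm x k) ((x, \<one>\<^bsub>GG (sY x)\<^esub>) # L, p) = apfst ((#) (x, \<one>\<^bsub>GG (sY x)\<^esub>)) (grp_act (hplus Y x k) (L, p))"
  using rep_coord_of_image by simp

definition edge_act :: "'y \<Rightarrow> ('y \<times> 'g) list \<times> 'z \<times> 'b \<Rightarrow> ('y \<times> 'g) list \<times> 'z \<times> 'b" where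
  "edge_act x n =
     (if sY x = x then n
      else if cancels x (fst n) then apfst tl n
      else apfst ((#) (x, \<one>\<^bsub>GG (sY x)\<^esub>)) n)"

lemma edge_act_nf:
  assumes x: "x \<in> gog_car Y" and "nf (gtgt Y x) n"
  shows "nf (sY x) (edge_act x n)"
proof -
  obtain L w c where n_eq: "n = (L, w, c)"
    by (cases n)
  have n: "nf (gtgt Y x) (L, w, c)"
    using assms(2) n_eq by simp
  consider "sY x = x" | "sY x \<noteq> x" "cancels x L" | "sY x \<noteq> x" "\<not> cancels x L"
    by blast
  then show ?thesis
  proof cases
    case 1
    then show ?thesis
      using n n_eq gtgt_vertex[OF gog_Y x] by (simp add: edge_act_def)
  next
    case 2
    then obtain L' where "L = (rY x, \<one>\<^bsub>GG (sY (rY x))\<^esub>) # L'"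
      unfolding cancels_def by (auto split: list.splits)
    then show ?thesis
      using 2 n n_eq gtgt_rev[OF gog_Y x] Y_gogD(4)[OF x] by (simp add: edge_act_def)
  next
    case 3
    then show ?thesis
      using n n_eq x rep_one[OF x] group.is_monoid[OF src_group[OF x]] by (simp add: edge_act_def)
  qed
qed

lemma edge_act_rev:
  assumes x: "x \<in> gog_car Y" and "nf (sY x) n"
  shows "edge_act x (edge_act (rY x) n) = n"
proof (cases "sY x = x")
  case True
  then have "rY x = x"
    using Y_gogD(5)[OF x] by metis
  then show ?thesis
    using True by (simp add: edge_act_def)
next
  case False
  note edge = False
  obtain L w c where n_eq: "n = (L, w, c)"
    by (cases n)
  have Y_graph: "is_graph (gog_car Y) sY rY"
    using gog_Y unfolding graph_of_groups_def by blast
  have rx: "sY (rY x) \<noteq> rY x" "rY (rY x) = x"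
    using is_graph_rev_edge(2)[OF Y_graph x edge] Y_gogD(4)[OF x] by auto
  show ?thesis
  proof (cases "cancels (rY x) L")
    case True
    then obtain L' where "L = (x, \<one>\<^bsub>GG (sY x)\<^esub>) # L'"
      unfolding cancels_def using rx(2) by (auto split: list.splits)
    then show ?thesis
      using True edge rx assms(2) n_eq by (simp add: edge_act_def)
  next
    case False
    then show ?thesis
      using edge rx n_eq by (simp add: edge_act_def cancels_def)
  qed
qed

lemma edge_act_conj:
  assumes x: "x \<in> gog_car Y" and g: "g \<in> carrier (GG x)" and "nf (gtgt Y x) n"
  shows "grp_act (sm x g) (edge_act x n) = edge_act x (grp_act (hplus Y x g) n)"
proof -
  obtain L w c where n_eq: "n = (L, w, c)"
    by (cases n)
  have red: "reduced (gtgt Y x) L (gob_lam B w)"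
    using assms(3) n_eq by simp
  consider "sY x = x" | "sY x \<noteq> x" "cancels x L" | "sY x \<noteq> x" "\<not> cancels x L"
    by blast
  then show ?thesis
  proof cases
    case 1
    then show ?thesis
      using gog_vertex_maps[OF gog_Y x 1 g] n_eq by (simp add: edge_act_def)
  next
    case 2
    then obtain L' where L: "L = (rY x, \<one>\<^bsub>GG (sY (rY x))\<^esub>) # L'"
      unfolding cancels_def by (auto split: list.splits)
    have k: "gog_hrev Y x g \<in> carrier (GG (rY x))"
      using group_hom.hom_closed[OF gog_rev_hom[OF gog_Y x] g] .
    have "grp_act (hplus Y x g) (L, w, c)
        = apfst ((#) (rY x, \<one>\<^bsub>GG (sY (rY x))\<^esub>)) (grp_act (sm x g) (L', w, c))"
      unfolding L hplus_def
      using grp_act_image_head[OF Y_gogD(2)[OF x] k] hplus_rev[OF gog_Y x g]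
      by (simp add: hplus_def)
    moreover obtain L2 w2 c2 where "grp_act (sm x g) (L', w, c) = (L2, w2, c2)"
      by (metis prod.exhaust)
    ultimately show ?thesis
      using 2 L n_eq by (simp add: edge_act_def cancels_def)
  next
    case 3
    have "cancels x (fst (grp_act (hplus Y x g) (L, w, c))) \<longleftrightarrow> cancels x L"
      using cancels_grp_act[OF x hplus_in_image[OF gog_Y x g] red] .
    then show ?thesis
      using 3 grp_act_image_head[OF x g] n_eq by (simp add: edge_act_def)
  qed
qed

fun letter_act :: "('y, 'g) letter \<Rightarrow> ('y \<times> 'g) list \<times> 'z \<times> 'b \<Rightarrow> ('y \<times> 'g) list \<times> 'z \<times> 'b" where
  "letter_act (Gen x) = edge_act x"
| "letter_act (Elt u h) = grp_act h"

lemma word_act_nf: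
  assumes "valid_word Y q d e" "nf e n"
  shows "nf d (foldr letter_act q n)"
  using assms(1)
proof (induction q arbitrary: d)
  case Nil
  then show ?case using assms(2) by simp
next
  case (Cons l q)
  then show ?case
    by (cases l) (auto intro: edge_act_nf grp_act_nf)
qed

lemma basic_rel_act:
  assumes "(l, r) \<in> basic_rel Y" "valid_word Y l m m'" "nf m' n"
  shows "foldr letter_act l n = foldr letter_act r n"
  using assms(1)
proof cases
  case (mult v g h)
  then show ?thesis
    using assms(2,3) grp_act_mult[of v n g h] by auto
next
  case (one v)
  then show ?thesis
    using assms(2,3) grp_act_one[of v n] by auto
next
  case (vert v)
  then show ?thesis
    by (simp add: edge_act_def gverts_def verts_def)
next
  case (inv x)
  then show ?thesis
    using assms(2,3) edge_act_rev[of x n] gtgt_rev[OF gog_Y] by auto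
next
  case (conj x g)
  then show ?thesis
    using assms(2,3) edge_act_conj[of x g n] by auto
qed

lemma word_step_act:
  assumes "(q, q') \<in> word_step Y" "valid_word Y q d e" "nf e n"
  shows "foldr letter_act q n = foldr letter_act q' n"
proof -
  obtain u l r t where q: "q = u @ l @ t" "q' = u @ r @ t" and lr: "(l, r) \<in> basic_rel Y"
    using assms(1) unfolding word_step_def by blast
  obtain m1 m2 where v: "valid_word Y u d m1" "valid_word Y l m1 m2" "valid_word Y t m2 e"
    using assms(2) q valid_word_append[OF gog_Y] by metis
  have "nf m2 (foldr letter_act t n)"
    using word_act_nf[OF v(3) assms(3)] .
  then show ?thesis
    using basic_rel_act[OF lr v(2)] q by simp
qed

end

section \<open>Pushing paths of \<open>X\<close> across a left-fibrant graph of bisets\<close>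

locale fibrant_biset_graph = injective_biset_graph B Y X
  for B :: "('z, 'y, 'x, 'b, 'g, 'h) gob" and Y :: "('y, 'g) gog" and X :: "('x, 'h) gog" +
  assumes fibrant: "left_fibrant B Y X"
begin

lemma rho_bedges: "e \<in> bedges B \<Longrightarrow> gob_rho B e \<in> gedges X"
  using fibrant unfolding left_fibrant_def by blast

context
  fixes w f
  assumes w: "w \<in> bverts B" and f: "f \<in> gedges X" "gog_src X f = gob_rho B w"
begin

lemma fib_bij: "bij_betw (\<lambda>C. the_elem (fib_map B w ` C)) (fib_dom B Y w f // fib_rel B Y w f) (gob_set B w)"
proof -
  have "\<forall>v\<in>bverts B. \<forall>f\<in>gedges X. gog_src X f = gob_rho B v \<longrightarrow>
          bij_betw (\<lambda>C. the_elem (fib_map B v ` C)) (fib_dom B Y v f // fib_rel B Y v f) (gob_set B v)"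
    using fibrant unfolding left_fibrant_def by (rule conjunct2)
  from mp[OF bspec[OF bspec[OF this w] f(1)] f(2)] show ?thesis .
qed

lemmas fib_map_surj = quotient_map_bijD(1)[OF equiv_fib_rel fib_map_respects[OF w] fib_bij]
lemmas fib_map_eq_imp_fib_rel = quotient_map_bijD(2)[OF equiv_fib_rel fib_map_respects[OF w] fib_bij]

end

definition fib_decomp :: "'z \<Rightarrow> 'x \<Rightarrow> 'b \<Rightarrow> 'z \<times> 'g \<times> 'b" where
  "fib_decomp w f c = (SOME y. y \<in> fib_dom B Y w f \<and> fib_map B w y = c)"

lemma fib_decomp:
  assumes "w \<in> bverts B" "f \<in> gedges X" "gog_src X f = gob_rho B w" "c \<in> gob_set B w"
  shows "fib_decomp w f c \<in> fib_dom B Y w f" "fib_map B w (fib_decomp w f c) = c"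
proof -
  have "\<exists>y. y \<in> fib_dom B Y w f \<and> fib_map B w y = c"
    using fib_map_surj[OF assms] by blast
  from someI_ex[OF this]
  show "fib_decomp w f c \<in> fib_dom B Y w f" "fib_map B w (fib_decomp w f c) = c"
    unfolding fib_decomp_def by simp_all
qed

text \<open>\<open>right_nf w c p\<close> is the normal form of \<open>1 \<otimes> c \<otimes> p\<close>. An edge \<open>f\<close> of \<open>X\<close> is moved across \<open>c\<close> by
  writing \<open>c = g b\<^sup>-\<close> with \<open>\<rho>(e) = f\<close> and using \<open>b\<^sup>- \<otimes> f p = \<lambda>(e) \<otimes> b\<^sup>+ \<otimes> p\<close>.\<close>

fun right_nf :: "'z \<Rightarrow> 'b \<Rightarrow> ('x, 'h) letter list \<Rightarrow> ('y \<times> 'g) list \<times> 'z \<times> 'b" where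
  "right_nf w c [] = ([], w, c)"
| "right_nf w c (Elt u h # p) = right_nf w (gob_ract B w c h) p"
| "right_nf w c (Gen f # p) =
     (if gog_src X f = f then right_nf w c p
      else case fib_decomp w f c of (e, g, b) \<Rightarrow>
        grp_act g (edge_act (gob_lam B e) (right_nf (btgt B e) (bplus B e b) p)))"

fun fib_nf :: "('x, 'h) letter list \<Rightarrow> 'z \<times> 'g \<times> 'b \<Rightarrow> ('y \<times> 'g) list \<times> 'z \<times> 'b" where
  "fib_nf p (e, g, b) = grp_act g (edge_act (gob_lam B e) (right_nf (btgt B e) (bplus B e b) p))"

lemma right_nf_edge: "gog_src X f \<noteq> f \<Longrightarrow> right_nf w c (Gen f # p) = fib_nf p (fib_decomp w f c)"
  by (cases "fib_decomp w f c") simp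

declare right_nf.simps(3) [simp del]

text \<open>Both properties have to be proved together: equivariance for the tail of a path is what
  makes \<open>right_nf\<close> independent of the decomposition chosen for its first edge.\<close>

definition right_nf_sound :: "('x, 'h) letter list \<Rightarrow> bool" where
  "right_nf_sound p \<longleftrightarrow>
     (\<forall>w c s. w \<in> bverts B \<longrightarrow> c \<in> gob_set B w \<longrightarrow> valid_word X p (gob_rho B w) s \<longrightarrow>
        nf (gob_lam B w) (right_nf w c p) \<and>
        (\<forall>k\<in>carrier (GG (gob_lam B w)). right_nf w (gob_lact B w k c) p = grp_act k (right_nf w c p)))"

lemma right_nf_soundD:
  assumes "right_nf_sound p" "w \<in> bverts B" "c \<in> gob_set B w" "valid_word X p (gob_rho B w) s"
  shows "nf (gob_lam B w) (right_nf w c p)"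
    and "k \<in> carrier (GG (gob_lam B w)) \<Longrightarrow> right_nf w (gob_lact B w k c) p = grp_act k (right_nf w c p)"
  using assms unfolding right_nf_sound_def by blast+

context
  fixes p s and e g b w f
  assumes p: "right_nf_sound p" "valid_word X p (gtgt X f) s"
    and y: "(e, g, b) \<in> fib_dom B Y w f"
begin

lemma fib_nf_target_nf: "nf (gob_lam B w) (edge_act (gob_lam B e) (right_nf (btgt B e) (bplus B e b) p))"
proof -
  note t = fib_dom_target[OF y]
  have "nf (gtgt Y (gob_lam B e)) (right_nf (btgt B e) (bplus B e b) p)"
    using right_nf_soundD(1)[OF p(1) t(1,2)] p(2) t(3,4) by simp
  then show ?thesis
    using edge_act_nf[OF t(5)] t(6) by simp
qed

lemma fib_nf_nf: "nf (gob_lam B w) (fib_nf p (e, g, b))"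
  using grp_act_nf[OF fib_nf_target_nf fib_domD(5)[OF y]] by simp

lemma fib_nf_grp_act:
  "k \<in> carrier (GG (gob_lam B w)) \<Longrightarrow> fib_nf p (e, k \<otimes>\<^bsub>GG (gob_lam B w)\<^esub> g, b) = grp_act k (fib_nf p (e, g, b))"
  using grp_act_mult[OF fib_nf_target_nf _ fib_domD(5)[OF y]] by simp

end

text \<open>Compatibility with the tensor relation of \<open>G\<^bsub>\<lambda>(w)\<^esub> \<otimes>\<^bsub>G\<^bsub>\<lambda>(e)\<^esub>\<^esub> B\<^sub>e\<close> is where the
  conjugation relation \<open>g\<^sup>- x = x g\<^sup>+\<close> of \<open>\<pi>\<^sub>1(Y)\<close> enters.\<close>

lemma fib_nf_respects:
  assumes p: "right_nf_sound p" "valid_word X p (gtgt X f) s"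
  shows "fib_nf p respects fib_rel B Y w f"
proof (rule fib_rel_invariant)
  fix e g k b
  assume e: "e \<in> bedges B" "gob_rho B e = f" "gob_src B e = w" and g: "g \<in> carrier (GG (gob_lam B w))"
    and k: "k \<in> carrier (GG (gob_lam B e))" and b: "b \<in> gob_set B e"
  have y: "(e, g, b) \<in> fib_dom B Y w f"
    using fib_domI[OF e g b] .
  note t = fib_dom_target[OF y]
  have ec: "e \<in> gob_car B"
    using bedgesD[OF e(1)] .
  let ?N = "right_nf (btgt B e) (bplus B e b) p"
  have N: "nf (gtgt Y (gob_lam B e)) ?N"
    using right_nf_soundD(1)[OF p(1) t(1,2)] p(2) t(3,4) by simp
  have hk: "hplus Y (gob_lam B e) k \<in> carrier (GG (gob_lam B (btgt B e)))"
    using group_hom.hom_closed[OF hplus_hom[OF gog_Y t(5)] k] t(4) by simp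
  have sk: "sm (gob_lam B e) k \<in> carrier (GG (gob_lam B w))"
    using group_hom.hom_closed[OF gog_src_hom[OF gog_Y t(5)] k] t(6) by simp
  have "fib_nf p (e, g, gob_lact B e k b)
      = grp_act g (edge_act (gob_lam B e) (right_nf (btgt B e) (gob_lact B (btgt B e) (hplus Y (gob_lam B e) k) (bplus B e b)) p))"
    using bplus_lact[OF ec k b] by simp
  also have "\<dots> = grp_act g (edge_act (gob_lam B e) (grp_act (hplus Y (gob_lam B e) k) ?N))"
    using right_nf_soundD(2)[OF p(1) t(1,2) _ hk] p(2) t(3) by simp
  also have "\<dots> = grp_act g (grp_act (sm (gob_lam B e) k) (edge_act (gob_lam B e) ?N))"
    using edge_act_conj[OF t(5) k N] by simp
  also have "\<dots> = fib_nf p (e, g \<otimes>\<^bsub>GG (gob_lam B w)\<^esub> sm (gob_lam B e) k, b)"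
    using grp_act_mult[OF fib_nf_target_nf[OF p y] g sk] by simp
  finally show "fib_nf p (e, g \<otimes>\<^bsub>GG (gob_lam B w)\<^esub> sm (gob_lam B e) k, b) = fib_nf p (e, g, gob_lact B e k b)"
    by simp
qed

lemma right_nf_edge_any:
  assumes p: "right_nf_sound p" "valid_word X p (gtgt X f) s"
    and w: "w \<in> bverts B" and f: "f \<in> gedges X" "gog_src X f = gob_rho B w" and c: "c \<in> gob_set B w"
    and y: "y \<in> fib_dom B Y w f" "fib_map B w y = c"
  shows "right_nf w c (Gen f # p) = fib_nf p y"
proof -
  have "gog_src X f \<noteq> f"
    using f(1) unfolding gedges_def edges_def by simp
  moreover have "(fib_decomp w f c, y) \<in> fib_rel B Y w f"
    using fib_map_eq_imp_fib_rel[OF w f] fib_decomp[OF w f c] y by simp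
  ultimately show ?thesis
    using right_nf_edge congruentD[OF fib_nf_respects[OF p]] by simp
qed

lemma right_nf_sound_edge:
  assumes p: "right_nf_sound p" "valid_word X p (gtgt X f) s"
    and w: "w \<in> bverts B" and f: "f \<in> gedges X" "gog_src X f = gob_rho B w" and c: "c \<in> gob_set B w"
  shows "nf (gob_lam B w) (right_nf w c (Gen f # p))"
    and "k \<in> carrier (GG (gob_lam B w)) \<Longrightarrow>
         right_nf w (gob_lact B w k c) (Gen f # p) = grp_act k (right_nf w c (Gen f # p))"
proof -
  obtain e g b where y_eq: "fib_decomp w f c = (e, g, b)"
    by (cases "fib_decomp w f c")
  have y: "(e, g, b) \<in> fib_dom B Y w f" "fib_map B w (e, g, b) = c"
    using fib_decomp[OF w f c] y_eq by auto
  have eq: "right_nf w c (Gen f # p) = fib_nf p (e, g, b)"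
    using right_nf_edge_any[OF p w f c y] .
  show "nf (gob_lam B w) (right_nf w c (Gen f # p))"
    using fib_nf_nf[OF p y(1)] eq by simp
  assume k: "k \<in> carrier (GG (gob_lam B w))"
  note d = fib_domD[OF y(1)]
  interpret G: group "GG (gob_lam B w)"
    using bverts_group[OF w] .
  have cs: "gob_csrc B e b \<in> gob_set B w"
    using B_congruenceD(1)[OF d(2,6)] d(4) by simp
  have y': "(e, k \<otimes>\<^bsub>GG (gob_lam B w)\<^esub> g, b) \<in> fib_dom B Y w f"
    using fib_domI[OF d(1,3,4) _ d(6)] k d(5) by simp
  have "fib_map B w (e, k \<otimes>\<^bsub>GG (gob_lam B w)\<^esub> g, b) = gob_lact B w k c"
    using biset_lact_mult[OF bverts_biset[OF w] k d(5) cs] y(2) unfolding fib_map_def by simp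
  then have "right_nf w (gob_lact B w k c) (Gen f # p) = fib_nf p (e, k \<otimes>\<^bsub>GG (gob_lam B w)\<^esub> g, b)"
    using right_nf_edge_any[OF p w f biset_lact_closed[OF bverts_biset[OF w] k c] y'] by simp
  then show "right_nf w (gob_lact B w k c) (Gen f # p) = grp_act k (right_nf w c (Gen f # p))"
    using fib_nf_grp_act[OF p y(1) k] eq by simp
qed

lemma right_nf_sound_Cons:
  assumes p: "right_nf_sound p"
  shows "right_nf_sound (l # p)"
  unfolding right_nf_sound_def
proof (intro allI impI)
  fix w c s
  assume w: "w \<in> bverts B" and c: "c \<in> gob_set B w" and v: "valid_word X (l # p) (gob_rho B w) s"
  note bis = bverts_biset[OF w]
  show "nf (gob_lam B w) (right_nf w c (l # p)) \<and>
     (\<forall>k\<in>carrier (GG (gob_lam B w)). right_nf w (gob_lact B w k c) (l # p) = grp_act k (right_nf w c (l # p)))"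
  proof (cases l)
    case (Elt u h)
    with v have h: "h \<in> carrier (gog_grp X (gob_rho B w))" and v': "valid_word X p (gob_rho B w) s"
      by auto
    note c' = biset_ract_closed[OF bis c h]
    have "right_nf w (gob_lact B w k c) (l # p) = grp_act k (right_nf w c (l # p))"
      if k: "k \<in> carrier (GG (gob_lam B w))" for k
      using right_nf_soundD(2)[OF p w c' v' k] biset_lact_ract[OF bis k h c] Elt by simp
    then show ?thesis
      using right_nf_soundD(1)[OF p w c' v'] Elt by simp
  next
    case (Gen f)
    with v have f: "f \<in> gog_car X" "gog_src X f = gob_rho B w" and v': "valid_word X p (gtgt X f) s"
      by auto
    show ?thesis
    proof (cases "gog_src X f = f")
      case True
      then have "valid_word X p (gob_rho B w) s"
        using v' f gtgt_vertex[OF gog_X f(1)] by simp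
      then show ?thesis
        using right_nf_soundD[OF p w] c biset_lact_closed[OF bis _ c] Gen True
        by (simp add: right_nf.simps(3))
    next
      case False
      then have "f \<in> gedges X"
        using f(1) unfolding gedges_def edges_def by simp
      then show ?thesis
        using right_nf_sound_edge[OF p(1) v' w _ f(2) c] Gen by blast
    qed
  qed
qed

lemma right_nf_sound_all: "right_nf_sound p"
proof (induction p)
  case Nil
  show ?case
    unfolding right_nf_sound_def by simp
next
  case (Cons l p)
  then show ?case
    by (rule right_nf_sound_Cons)
qed

lemmas right_nf_nf = right_nf_soundD(1)[OF right_nf_sound_all]
lemmas right_nf_lact = right_nf_soundD(2)[OF right_nf_sound_all]

section \<open>Invariance under the relations of the fundamental biset\<close>

lemma edge_act_right_nf_rev:
  assumes e: "e \<in> bedges B" and b: "b \<in> gob_set B e"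
    and v: "valid_word X p (gob_rho B (gob_src B e)) s"
  shows "edge_act (gob_lam B e) (right_nf (btgt B e) (bplus B e b) (Gen (gog_rev X (gob_rho B e)) # p))
         = right_nf (gob_src B e) (gob_csrc B e b) p"
proof -
  have ec: "e \<in> gob_car B"
    using bedgesD[OF e] .
  let ?t = "btgt B e" and ?f = "gog_rev X (gob_rho B e)" and ?e' = "gob_rev B e"
  have t: "?t \<in> bverts B"
    using btgt_in_bverts[OF ec] .
  have f: "?f \<in> gedges X" "gog_src X ?f = gob_rho B ?t"
    using gedges_rev[OF gog_X rho_bedges[OF e]] rho_btgt[OF ec] by (auto simp: gtgt_def)
  have v': "valid_word X p (gtgt X ?f) s"
    using v B_eltD(8,9)[OF ec] X_gogD(4) by (simp add: gtgt_def)
  have one: "\<one>\<^bsub>GG (gob_lam B ?t)\<^esub> \<in> carrier (GG (gob_lam B ?t))"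
    using group.is_monoid[OF bverts_group[OF t]] by simp
  have y: "(?e', \<one>\<^bsub>GG (gob_lam B ?t)\<^esub>, gob_crev B e b) \<in> fib_dom B Y ?t ?f"
    using fib_domI[OF bedges_rev[OF e] B_eltD(10)[OF ec] _ one B_congruenceD(2)[OF ec b]]
    by (simp add: btgt_def)
  have "fib_map B ?t (?e', \<one>\<^bsub>GG (gob_lam B ?t)\<^esub>, gob_crev B e b) = bplus B e b"
    using biset_lact_one[OF bverts_biset[OF t] bplus_closed[OF ec b]] by (simp add: fib_map_def bplus_def)
  then have "right_nf ?t (bplus B e b) (Gen ?f # p) = fib_nf p (?e', \<one>\<^bsub>GG (gob_lam B ?t)\<^esub>, gob_crev B e b)"
    using right_nf_edge_any[OF right_nf_sound_all v' t f bplus_closed[OF ec b] y] by simp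
  also have "\<dots> = grp_act \<one>\<^bsub>GG (gob_lam B ?t)\<^esub>
      (edge_act (rY (gob_lam B e)) (right_nf (gob_src B e) (gob_csrc B e b) p))"
    using bplus_rev[OF ec b] B_eltD(4,7)[OF ec] by (simp add: btgt_def)
  also have "\<dots> = edge_act (rY (gob_lam B e)) (right_nf (gob_src B e) (gob_csrc B e b) p)"
  proof (rule grp_act_one)
    have "nf (sY (gob_lam B e)) (right_nf (gob_src B e) (gob_csrc B e b) p)"
      using right_nf_nf[OF src_in_bverts[OF ec] B_congruenceD(1)[OF ec b] v] B_eltD(6)[OF ec] by simp
    then show "nf (gob_lam B ?t) (edge_act (rY (gob_lam B e)) (right_nf (gob_src B e) (gob_csrc B e b) p))"
      using edge_act_nf[OF Y_gogD(2)[OF B_eltD(5)[OF ec]]] gtgt_rev[OF gog_Y B_eltD(5)[OF ec]]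
        lam_btgt[OF ec] by (simp add: gtgt_def)
  qed
  finally show ?thesis
    using edge_act_rev[OF B_eltD(5)[OF ec]]
      right_nf_nf[OF src_in_bverts[OF ec] B_congruenceD(1)[OF ec b] v] B_eltD(6)[OF ec] by simp
qed

context
  fixes w c
  assumes w: "w \<in> bverts B" and c: "c \<in> gob_set B w"
begin

lemma right_nf_Gen_decomp:
  assumes f: "f \<in> gog_car X" "gog_src X f = gob_rho B w" "gog_src X f \<noteq> f"
  shows "fib_decomp w f c \<in> fib_dom B Y w f" "fib_map B w (fib_decomp w f c) = c"
    "right_nf w c (Gen f # p) = fib_nf p (fib_decomp w f c)"
proof -
  have "f \<in> gedges X"
    using f(1,3) unfolding gedges_def edges_def by simp
  then show "fib_decomp w f c \<in> fib_dom B Y w f" "fib_map B w (fib_decomp w f c) = c"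
    using fib_decomp[OF w _ f(2) c] by auto
  show "right_nf w c (Gen f # p) = fib_nf p (fib_decomp w f c)"
    using right_nf_edge[OF f(3)] .
qed

lemma right_nf_rev_cancel:
  assumes f: "f \<in> gog_car X" "gog_src X f = gob_rho B w"
    and v: "valid_word X t (gob_rho B w) s"
  shows "right_nf w c (Gen f # Gen (gog_rev X f) # t) = right_nf w c t"
proof (cases "gog_src X f = f")
  case True
  then have "gog_rev X f = f"
    using X_gogD(5)[OF f(1)] by metis
  then show ?thesis
    using True by (simp add: right_nf.simps(3))
next
  case False
  obtain e g b where y_eq: "fib_decomp w f c = (e, g, b)"
    by (cases "fib_decomp w f c")
  note y = right_nf_Gen_decomp(1,2)[OF f False, unfolded y_eq]
  note eq = right_nf_Gen_decomp(3)[OF f False, unfolded y_eq]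
  note d = fib_domD[OF y(1)]
  have "right_nf w c (Gen f # Gen (gog_rev X f) # t) = grp_act g (right_nf w (gob_csrc B e b) t)"
    using eq edge_act_right_nf_rev[OF d(1,6)] v d(3,4) by simp
  also have "\<dots> = right_nf w c t"
    using right_nf_lact[OF w _ v d(5), of "gob_csrc B e b"] B_congruenceD(1)[OF d(2,6)] d(4) y(2)
    by (simp add: fib_map_def)
  finally show ?thesis .
qed

lemma right_nf_conj:
  assumes f: "f \<in> gog_car X" "gog_src X f = gob_rho B w" and h: "h \<in> carrier (gog_grp X f)"
    and v: "valid_word X t (gtgt X f) s"
  shows "right_nf w c (Elt (gog_src X f) (gog_hsrc X f h) # Gen f # t)
       = right_nf w c (Gen f # Elt (gtgt X f) (hplus X f h) # t)"
proof (cases "gog_src X f = f")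
  case True
  then show ?thesis
    using gog_vertex_maps[OF gog_X f(1) True h] gtgt_vertex[OF gog_X f(1) True]
    by (simp add: right_nf.simps(3))
next
  case False
  then have fe: "f \<in> gedges X"
    using f(1) unfolding gedges_def edges_def by simp
  obtain e g b where y_eq: "fib_decomp w f c = (e, g, b)"
    by (cases "fib_decomp w f c")
  note y = right_nf_Gen_decomp(1,2)[OF f False, unfolded y_eq]
  note eq = right_nf_Gen_decomp(3)[OF f False, unfolded y_eq]
  note d = fib_domD[OF y(1)]
  have hs: "gog_hsrc X f h \<in> carrier (gog_grp X (gob_rho B w))"
    using group_hom.hom_closed[OF gog_src_hom[OF gog_X f(1)] h] f(2) by simp
  have hc: "h \<in> carrier (gog_grp X (gob_rho B e))"
    using h d(3) by simp
  have y': "(e, g, gob_ract B e b h) \<in> fib_dom B Y w f"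
    using fib_domI[OF d(1,3,4,5) biset_ract_closed[OF B_eltD(11)[OF d(2)] d(6) hc]] .
  have "fib_map B w (e, g, gob_ract B e b h) = gob_ract B w c (gog_hsrc X f h)"
    using B_congruenceD(6)[OF d(2,6) hc] biset_lact_ract[OF bverts_biset[OF w] d(5) hs]
      B_congruenceD(1)[OF d(2,6)] d(3,4) y(2)
    by (simp add: fib_map_def)
  then have "right_nf w c (Elt (gog_src X f) (gog_hsrc X f h) # Gen f # t) = fib_nf t (e, g, gob_ract B e b h)"
    using right_nf_edge_any[OF right_nf_sound_all v w fe f(2) biset_ract_closed[OF bverts_biset[OF w] c hs] y']
    by simp
  also have "\<dots> = right_nf w c (Gen f # Elt (gtgt X f) (hplus X f h) # t)"
    using eq bplus_ract[OF d(2) hc d(6)] d(3) by simp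
  finally show ?thesis .
qed

lemma basic_rel_right_nf:
  assumes lr: "(l, r) \<in> basic_rel X" and v: "valid_word X (l @ t) (gob_rho B w) s"
  shows "right_nf w c (l @ t) = right_nf w c (r @ t)"
  using lr
proof cases
  case (mult u g h)
  then show ?thesis
    using biset_ract_mult[OF bverts_biset[OF w] _ _ c] v by auto
next
  case (one u)
  then show ?thesis
    using biset_ract_one[OF bverts_biset[OF w] c] v by auto
next
  case (vert u)
  then show ?thesis
    by (simp add: right_nf.simps(3) gverts_def verts_def)
next
  case (inv f)
  then show ?thesis
    using v right_nf_rev_cancel gtgt_rev[OF gog_X] by auto
next
  case (conj f h)
  then show ?thesis
    using v right_nf_conj by auto
qed

end

lemma right_nf_basic_rel_step:
  assumes lr: "(l, r) \<in> basic_rel X"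
  shows "w \<in> bverts B \<Longrightarrow> c \<in> gob_set B w \<Longrightarrow> valid_word X (u @ l @ t) (gob_rho B w) s
    \<Longrightarrow> right_nf w c (u @ l @ t) = right_nf w c (u @ r @ t)"
proof (induction u arbitrary: w c)
  case Nil
  then show ?case
    using basic_rel_right_nf[OF _ _ lr] by simp
next
  case (Cons a u)
  show ?case
  proof (cases a)
    case (Elt v h)
    with Cons.prems(3) have "h \<in> carrier (gog_grp X (gob_rho B w))" "v = gob_rho B w"
      by auto
    then show ?thesis
      using Cons.IH[OF Cons.prems(1) biset_ract_closed[OF bverts_biset[OF Cons.prems(1)] Cons.prems(2)]]
        Cons.prems(3) Elt by simp
  next
    case (Gen f)
    with Cons.prems(3) have f: "f \<in> gog_car X" "gog_src X f = gob_rho B w"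
      and v: "valid_word X (u @ l @ t) (gtgt X f) s"
      by auto
    show ?thesis
    proof (cases "gog_src X f = f")
      case True
      then show ?thesis
        using Cons.IH[OF Cons.prems(1,2)] v f gtgt_vertex[OF gog_X f(1)] Gen
        by (simp add: right_nf.simps(3))
    next
      case False
      obtain e g b where y_eq: "fib_decomp w f c = (e, g, b)"
        by (cases "fib_decomp w f c")
      note y = right_nf_Gen_decomp(1)[OF Cons.prems(1,2) f False, unfolded y_eq]
      note eq = right_nf_Gen_decomp(3)[OF Cons.prems(1,2) f False, unfolded y_eq]
      note t = fib_dom_target[OF y]
      show ?thesis
        using Cons.IH[OF t(1,2)] v t(3) eq Gen by simp
    qed
  qed
qed

lemma right_nf_word_step:
  assumes "(p, p') \<in> word_step X" "w \<in> bverts B" "c \<in> gob_set B w" "valid_word X p (gob_rho B w) s"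
  shows "right_nf w c p = right_nf w c p'"
proof -
  obtain u l r t where "p = u @ l @ t" "p' = u @ r @ t" "(l, r) \<in> basic_rel X"
    using assms(1) unfolding word_step_def by blast
  then show ?thesis
    using right_nf_basic_rel_step assms(2-4) by simp
qed

fun nf_of :: "'z \<times> ('y, 'g) letter list \<times> 'b \<times> ('x, 'h) letter list \<Rightarrow> ('y \<times> 'g) list \<times> 'z \<times> 'b" where
  "nf_of (z, q, b, p) = foldr letter_act q (right_nf z b p)"

lemma nf_of_fb_gen:
  assumes g: "(x1, x2) \<in> fb_gen B Y X" and x1: "x1 \<in> fb_dom B Y X d s"
  shows "nf_of x1 = nf_of x2"
  using g
proof (cases rule: fb_gen_cases)
  case (Y_step z q q' b p)
  then have xx: "x1 = (z, q, b, p)" "x2 = (z, q', b, p)"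
    by simp_all
  from x1 have "valid_word Y q d (gob_lam B z)" "nf (gob_lam B z) (right_nf z b p)"
    using right_nf_nf unfolding xx fb_dom_def by auto
  then show ?thesis
    using word_step_act[OF Y_step(2)] unfolding xx by simp
next
  case (X_step z q b p p')
  then have xx: "x1 = (z, q, b, p)" "x2 = (z, q, b, p')"
    by simp_all
  from x1 have "right_nf z b p = right_nf z b p'"
    using right_nf_word_step[OF X_step(2)] unfolding xx fb_dom_def by auto
  then show ?thesis
    unfolding xx by simp
next
  case (left z q g b p)
  then have xx: "x1 = (z, q @ [Elt (gob_lam B z) g], b, p)" "x2 = (z, q, gob_lact B z g b, p)"
    by simp_all
  from x1 have "g \<in> carrier (GG (gob_lam B z))" "z \<in> bverts B" "b \<in> gob_set B z"
    "valid_word X p (gob_rho B z) s"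
    unfolding xx fb_dom_def by (auto simp: valid_word_append[OF gog_Y])
  then show ?thesis
    using right_nf_lact unfolding xx by simp
next
  case (right z q b h p)
  then show ?thesis
    by simp
next
  case (edge e q b p)
  then have xx: "x1 = (gob_src B e, q, gob_csrc B e b, p)"
    "x2 = (btgt B e, q @ [Gen (gob_lam B e)], bplus B e b, Gen (gog_rev X (gob_rho B e)) # p)"
    by simp_all
  from x1 have "valid_word X p (gob_rho B (gob_src B e)) s"
    unfolding xx fb_dom_def by simp
  then show ?thesis
    using edge_act_right_nf_rev[OF edge(2,3)] unfolding xx by simp
qed

lemma nf_of_fb_rel:
  assumes "(x1, x2) \<in> fb_rel B Y X d s"
  shows "nf_of x1 = nf_of x2"
  using assms unfolding fb_rel_def by (rule eqc_invariant[where F = nf_of, rotated]) (rule nf_of_fb_gen)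

end

theorem mainTheorem18:
  fixes B :: "('z, 'y, 'x, 'b, 'g, 'h) gob"
    and Y :: "('y, 'g) gog"
    and X :: "('x, 'h) gog"
    and z :: 'z
  assumes "graph_of_bisets B Y X"
    and "left_fibrant B Y X"
    and "\<forall>y\<in>gog_car Y. inj_on (gog_hsrc Y y) (carrier (gog_grp Y y))"
    and "z \<in> bverts B"
  shows "nat_map B Y X z ` gob_set B z \<subseteq> fund_biset B Y X (gob_lam B z) (gob_rho B z)
         \<and> inj_on (nat_map B Y X z) (gob_set B z)"
proof -
  interpret fibrant_biset_graph B Y X
    using assms(1-3) by unfold_locales
  let ?R = "fb_rel B Y X (gob_lam B z) (gob_rho B z)"
  have dom: "(z, [], b, []) \<in> fb_dom B Y X (gob_lam B z) (gob_rho B z)" if "b \<in> gob_set B z" for b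
    using that bverts_images[OF assms(4)] assms(4) unfolding fb_dom_def by simp
  have "nat_map B Y X z b \<in> fund_biset B Y X (gob_lam B z) (gob_rho B z)" if "b \<in> gob_set B z" for b
    unfolding nat_map_def fund_biset_def using quotientI[OF dom[OF that]] .
  moreover have "b1 = b2"
    if b: "b1 \<in> gob_set B z" "b2 \<in> gob_set B z" and eq: "nat_map B Y X z b1 = nat_map B Y X z b2" for b1 b2
  proof -
    have "equiv (fb_dom B Y X (gob_lam B z) (gob_rho B z)) ?R"
      unfolding fb_rel_def by (rule equiv_eqc)
    then have "((z, [], b1, []), (z, [], b2, [])) \<in> ?R"
      using eq eq_equiv_class_iff[OF _ dom[OF b(1)] dom[OF b(2)]] unfolding nat_map_def by simp
    then show ?thesis
      using nf_of_fb_rel by fastforce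
  qed
  ultimately show ?thesis
    by (auto intro: inj_onI)
qed

end
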